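(* Let $(\mathcal{A}',\mathcal{A},\mathcal{A}'')$ and $(\mathcal{B}',\mathcal{B},\mathcal{B}'')$ be two recollements of abelian categories. Suppose there are functors $F:\mathcal{A}\to\mathcal{B}$, $F':\mathcal{A}'\to\mathcal{B}'$ and $F'':\mathcal{A}''\to\mathcal{B}''$ such that: (1) $F$ and $F'$ are equivalences of categories; (2) the functors $j^*F$ and $F''j^*$ are naturally isomorphic; (3) the functors $i_*F'$ and $Fi_*$ are naturally isomorphic. Then $F''$ is full and essentially surjective.
   Context: A recollement $(\mathcal{A}',\mathcal{A},\mathcal{A}'')$ of abelian categories consists of functors $i_*:\mathcal{A}'\to\mathcal{A}$, $i^*,i^!:\mathcal{A}\to\mathcal{A}'$, $j^*:\mathcal{A}\to\mathcal{A}''$, $j_!,j_*:\mathcal{A}''\to\mathcal{A}$ such that: there are adjunctions $(j_!,j^* )$, $(j^*,j_* )$, $(i^*,i_* )$, $(i_*,i^!)$; the units $\mathrm{id}\to i^!i_*$ and $\mathrm{id}\to j^*j_!$ are isomorphisms; the counits $i^*i_*\to\mathrm{id}$ and $j^*j_*\to\mathrm{id}$ are isomorphisms; and $i_*$ is an embedding onto the full subcategory of objects $A$ with $j^*A=0$. The same notation $i_*,i^*,i^!,j^*,j_!,j_*$ is used for the functors of both recollements. *)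

theory Defs
  imports Main
begin

section \<open>Categories (objects and morphisms carried by HOL types, relativised to sets)\<close>

record ('o, 'm) cat =
  Ob  :: "'o set"
  Hom :: "'o \<Rightarrow> 'o \<Rightarrow> 'm set"
  cmp :: "'m \<Rightarrow> 'm \<Rightarrow> 'm"   (* cmp C g f = g o f *)
  ide :: "'o \<Rightarrow> 'm"

definition category :: "('o, 'm) cat \<Rightarrow> bool" where
  "category C \<longleftrightarrow>
     (\<forall>a\<in>Ob C. ide C a \<in> Hom C a a) \<and>
     (\<forall>a\<in>Ob C. \<forall>b\<in>Ob C. \<forall>c\<in>Ob C. \<forall>f\<in>Hom C a b. \<forall>g\<in>Hom C b c.
          cmp C g f \<in> Hom C a c) \<and>
     (\<forall>a\<in>Ob C. \<forall>b\<in>Ob C. \<forall>f\<in>Hom C a b.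
          cmp C (ide C b) f = f \<and> cmp C f (ide C a) = f) \<and>
     (\<forall>a\<in>Ob C. \<forall>b\<in>Ob C. \<forall>c\<in>Ob C. \<forall>d\<in>Ob C.
        \<forall>f\<in>Hom C a b. \<forall>g\<in>Hom C b c. \<forall>h\<in>Hom C c d.
          cmp C h (cmp C g f) = cmp C (cmp C h g) f)"

definition iso_mor :: "('o, 'm) cat \<Rightarrow> 'o \<Rightarrow> 'o \<Rightarrow> 'm \<Rightarrow> bool" where
  "iso_mor C a b f \<longleftrightarrow> f \<in> Hom C a b \<and>
     (\<exists>g\<in>Hom C b a. cmp C g f = ide C a \<and> cmp C f g = ide C b)"

definition iso_obj :: "('o, 'm) cat \<Rightarrow> 'o \<Rightarrow> 'o \<Rightarrow> bool" where
  "iso_obj C a b \<longleftrightarrow> (\<exists>f. iso_mor C a b f)"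

definition zero_object :: "('o, 'm) cat \<Rightarrow> 'o \<Rightarrow> bool" where
  "zero_object C z \<longleftrightarrow> z \<in> Ob C \<and>
     (\<forall>b\<in>Ob C. (\<exists>!f. f \<in> Hom C z b) \<and> (\<exists>!f. f \<in> Hom C b z))"

definition zero_mor :: "('o, 'm) cat \<Rightarrow> 'o \<Rightarrow> 'o \<Rightarrow> 'm \<Rightarrow> bool" where
  "zero_mor C a b f \<longleftrightarrow> f \<in> Hom C a b \<and>
     (\<exists>z. zero_object C z \<and> (\<exists>g\<in>Hom C a z. \<exists>h\<in>Hom C z b. f = cmp C h g))"

definition mono :: "('o, 'm) cat \<Rightarrow> 'o \<Rightarrow> 'o \<Rightarrow> 'm \<Rightarrow> bool" where
  "mono C a b f \<longleftrightarrow> f \<in> Hom C a b \<and>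
     (\<forall>c\<in>Ob C. \<forall>g\<in>Hom C c a. \<forall>h\<in>Hom C c a. cmp C f g = cmp C f h \<longrightarrow> g = h)"

definition epi :: "('o, 'm) cat \<Rightarrow> 'o \<Rightarrow> 'o \<Rightarrow> 'm \<Rightarrow> bool" where
  "epi C a b f \<longleftrightarrow> f \<in> Hom C a b \<and>
     (\<forall>c\<in>Ob C. \<forall>g\<in>Hom C b c. \<forall>h\<in>Hom C b c. cmp C g f = cmp C h f \<longrightarrow> g = h)"

definition is_kernel :: "('o, 'm) cat \<Rightarrow> 'o \<Rightarrow> 'o \<Rightarrow> 'm \<Rightarrow> 'o \<Rightarrow> 'm \<Rightarrow> bool" where
  "is_kernel C a b f K k \<longleftrightarrow> f \<in> Hom C a b \<and> K \<in> Ob C \<and> k \<in> Hom C K a \<and>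
     zero_mor C K b (cmp C f k) \<and>
     (\<forall>c\<in>Ob C. \<forall>g\<in>Hom C c a. zero_mor C c b (cmp C f g) \<longrightarrow>
        (\<exists>!u. u \<in> Hom C c K \<and> cmp C k u = g))"

definition is_cokernel :: "('o, 'm) cat \<Rightarrow> 'o \<Rightarrow> 'o \<Rightarrow> 'm \<Rightarrow> 'o \<Rightarrow> 'm \<Rightarrow> bool" where
  "is_cokernel C a b f Q q \<longleftrightarrow> f \<in> Hom C a b \<and> Q \<in> Ob C \<and> q \<in> Hom C b Q \<and>
     zero_mor C a Q (cmp C q f) \<and>
     (\<forall>c\<in>Ob C. \<forall>g\<in>Hom C b c. zero_mor C a c (cmp C g f) \<longrightarrow>
        (\<exists>!u. u \<in> Hom C Q c \<and> cmp C u q = g))"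

definition has_product :: "('o, 'm) cat \<Rightarrow> 'o \<Rightarrow> 'o \<Rightarrow> bool" where
  "has_product C a b \<longleftrightarrow> (\<exists>p\<in>Ob C. \<exists>p1\<in>Hom C p a. \<exists>p2\<in>Hom C p b.
     \<forall>c\<in>Ob C. \<forall>f\<in>Hom C c a. \<forall>g\<in>Hom C c b.
       (\<exists>!u. u \<in> Hom C c p \<and> cmp C p1 u = f \<and> cmp C p2 u = g))"

definition has_coproduct :: "('o, 'm) cat \<Rightarrow> 'o \<Rightarrow> 'o \<Rightarrow> bool" where
  "has_coproduct C a b \<longleftrightarrow> (\<exists>s\<in>Ob C. \<exists>s1\<in>Hom C a s. \<exists>s2\<in>Hom C b s.
     \<forall>c\<in>Ob C. \<forall>f\<in>Hom C a c. \<forall>g\<in>Hom C b c.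
       (\<exists>!u. u \<in> Hom C s c \<and> cmp C u s1 = f \<and> cmp C u s2 = g))"

definition abelian :: "('o, 'm) cat \<Rightarrow> bool" where
  "abelian C \<longleftrightarrow> category C \<and>
     (\<exists>z. zero_object C z) \<and>
     (\<forall>a\<in>Ob C. \<forall>b\<in>Ob C. has_product C a b \<and> has_coproduct C a b) \<and>
     (\<forall>a\<in>Ob C. \<forall>b\<in>Ob C. \<forall>f\<in>Hom C a b.
        (\<exists>K k. is_kernel C a b f K k) \<and> (\<exists>Q q. is_cokernel C a b f Q q)) \<and>
     (\<forall>a\<in>Ob C. \<forall>b\<in>Ob C. \<forall>f. mono C a b f \<longrightarrow>
        (\<exists>c\<in>Ob C. \<exists>g\<in>Hom C b c. is_kernel C b c g a f)) \<and>
     (\<forall>a\<in>Ob C. \<forall>b\<in>Ob C. \<forall>f. epi C a b f \<longrightarrow>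
        (\<exists>c\<in>Ob C. \<exists>g\<in>Hom C c a. is_cokernel C c a g b f))"

record ('o1, 'm1, 'o2, 'm2) ftr =
  fo :: "'o1 \<Rightarrow> 'o2"
  fm :: "'m1 \<Rightarrow> 'm2"

definition is_functor :: "('o1, 'm1) cat \<Rightarrow> ('o2, 'm2) cat \<Rightarrow> ('o1, 'm1, 'o2, 'm2) ftr \<Rightarrow> bool" where
  "is_functor C D F \<longleftrightarrow>
     (\<forall>a\<in>Ob C. fo F a \<in> Ob D) \<and>
     (\<forall>a\<in>Ob C. \<forall>b\<in>Ob C. \<forall>f\<in>Hom C a b. fm F f \<in> Hom D (fo F a) (fo F b)) \<and>
     (\<forall>a\<in>Ob C. fm F (ide C a) = ide D (fo F a)) \<and>
     (\<forall>a\<in>Ob C. \<forall>b\<in>Ob C. \<forall>c\<in>Ob C. \<forall>f\<in>Hom C a b. \<forall>g\<in>Hom C b c.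
        fm F (cmp C g f) = cmp D (fm F g) (fm F f))"

definition fcomp :: "('o2, 'm2, 'o3, 'm3) ftr \<Rightarrow> ('o1, 'm1, 'o2, 'm2) ftr \<Rightarrow> ('o1, 'm1, 'o3, 'm3) ftr" where
  "fcomp G F = \<lparr>fo = fo G \<circ> fo F, fm = fm G \<circ> fm F\<rparr>"

definition fid :: "('o, 'm, 'o, 'm) ftr" where
  "fid = \<lparr>fo = id, fm = id\<rparr>"

definition nat_trans :: "('o1, 'm1) cat \<Rightarrow> ('o2, 'm2) cat \<Rightarrow> ('o1, 'm1, 'o2, 'm2) ftr \<Rightarrow>
    ('o1, 'm1, 'o2, 'm2) ftr \<Rightarrow> ('o1 \<Rightarrow> 'm2) \<Rightarrow> bool" where
  "nat_trans C D F G eta \<longleftrightarrow> is_functor C D F \<and> is_functor C D G \<and>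
     (\<forall>a\<in>Ob C. eta a \<in> Hom D (fo F a) (fo G a)) \<and>
     (\<forall>a\<in>Ob C. \<forall>b\<in>Ob C. \<forall>f\<in>Hom C a b.
        cmp D (eta b) (fm F f) = cmp D (fm G f) (eta a))"

definition nat_iso :: "('o1, 'm1) cat \<Rightarrow> ('o2, 'm2) cat \<Rightarrow> ('o1, 'm1, 'o2, 'm2) ftr \<Rightarrow>
    ('o1, 'm1, 'o2, 'm2) ftr \<Rightarrow> ('o1 \<Rightarrow> 'm2) \<Rightarrow> bool" where
  "nat_iso C D F G eta \<longleftrightarrow> nat_trans C D F G eta \<and>
     (\<forall>a\<in>Ob C. iso_mor D (fo F a) (fo G a) (eta a))"

definition nat_isomorphic :: "('o1, 'm1) cat \<Rightarrow> ('o2, 'm2) cat \<Rightarrow> ('o1, 'm1, 'o2, 'm2) ftr \<Rightarrow>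
    ('o1, 'm1, 'o2, 'm2) ftr \<Rightarrow> bool" where
  "nat_isomorphic C D F G \<longleftrightarrow> (\<exists>eta. nat_iso C D F G eta)"

definition adjunction :: "('o1, 'm1) cat \<Rightarrow> ('o2, 'm2) cat \<Rightarrow> ('o1, 'm1, 'o2, 'm2) ftr \<Rightarrow>
    ('o2, 'm2, 'o1, 'm1) ftr \<Rightarrow> ('o1 \<Rightarrow> 'm1) \<Rightarrow> ('o2 \<Rightarrow> 'm2) \<Rightarrow> bool" where
  "adjunction C D L R eta eps \<longleftrightarrow>
     is_functor C D L \<and> is_functor D C R \<and>
     nat_trans C C fid (fcomp R L) eta \<and>
     nat_trans D D (fcomp L R) fid eps \<and>
     (\<forall>a\<in>Ob C. cmp D (eps (fo L a)) (fm L (eta a)) = ide D (fo L a)) \<and>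
     (\<forall>b\<in>Ob D. cmp C (fm R (eps b)) (eta (fo R b)) = ide C (fo R b))"

definition full :: "('o1, 'm1) cat \<Rightarrow> ('o2, 'm2) cat \<Rightarrow> ('o1, 'm1, 'o2, 'm2) ftr \<Rightarrow> bool" where
  "full C D F \<longleftrightarrow> (\<forall>a\<in>Ob C. \<forall>b\<in>Ob C. \<forall>g\<in>Hom D (fo F a) (fo F b).
      \<exists>f\<in>Hom C a b. fm F f = g)"

definition faithful :: "('o1, 'm1) cat \<Rightarrow> ('o2, 'm2) cat \<Rightarrow> ('o1, 'm1, 'o2, 'm2) ftr \<Rightarrow> bool" where
  "faithful C D F \<longleftrightarrow> (\<forall>a\<in>Ob C. \<forall>b\<in>Ob C. \<forall>f\<in>Hom C a b. \<forall>g\<in>Hom C a b.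
      fm F f = fm F g \<longrightarrow> f = g)"

definition ess_surj :: "('o1, 'm1) cat \<Rightarrow> ('o2, 'm2) cat \<Rightarrow> ('o1, 'm1, 'o2, 'm2) ftr \<Rightarrow> bool" where
  "ess_surj C D F \<longleftrightarrow> (\<forall>d\<in>Ob D. \<exists>c\<in>Ob C. iso_obj D (fo F c) d)"

definition equivalence :: "('o1, 'm1) cat \<Rightarrow> ('o2, 'm2) cat \<Rightarrow> ('o1, 'm1, 'o2, 'm2) ftr \<Rightarrow> bool" where
  "equivalence C D F \<longleftrightarrow> is_functor C D F \<and>
     (\<exists>G. is_functor D C G \<and> nat_isomorphic C C (fcomp G F) fid \<and>
          nat_isomorphic D D (fcomp F G) fid)"

text \<open>recollement A' A A'' i_* i^* i^! j^* j_! j_*\<close>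
definition recollement ::
  "('a1, 'b1) cat \<Rightarrow> ('a, 'b) cat \<Rightarrow> ('a2, 'b2) cat \<Rightarrow>
   ('a1, 'b1, 'a, 'b) ftr \<Rightarrow> ('a, 'b, 'a1, 'b1) ftr \<Rightarrow> ('a, 'b, 'a1, 'b1) ftr \<Rightarrow>
   ('a, 'b, 'a2, 'b2) ftr \<Rightarrow> ('a2, 'b2, 'a, 'b) ftr \<Rightarrow> ('a2, 'b2, 'a, 'b) ftr \<Rightarrow> bool" where
  "recollement A1 A A2 ilow iup ish jup jsh jlow \<longleftrightarrow>
     abelian A1 \<and> abelian A \<and> abelian A2 \<and>
     is_functor A1 A ilow \<and> is_functor A A1 iup \<and> is_functor A A1 ish \<and>
     is_functor A A2 jup \<and> is_functor A2 A jsh \<and> is_functor A2 A jlow \<and>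
     \<comment> \<open>(j_!, j^*) with invertible unit\<close>
     (\<exists>eta eps. adjunction A2 A jsh jup eta eps \<and>
        (\<forall>a\<in>Ob A2. iso_mor A2 a (fo jup (fo jsh a)) (eta a))) \<and>
     \<comment> \<open>(j^*, j_*) with invertible counit\<close>
     (\<exists>eta eps. adjunction A A2 jup jlow eta eps \<and>
        (\<forall>a\<in>Ob A2. iso_mor A2 (fo jup (fo jlow a)) a (eps a))) \<and>
     \<comment> \<open>(i^*, i_*) with invertible counit\<close>
     (\<exists>eta eps. adjunction A A1 iup ilow eta eps \<and>
        (\<forall>a\<in>Ob A1. iso_mor A1 (fo iup (fo ilow a)) a (eps a))) \<and>
     \<comment> \<open>(i_*, i^!) with invertible unit\<close>
     (\<exists>eta eps. adjunction A1 A ilow ish eta eps \<and>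
        (\<forall>a\<in>Ob A1. iso_mor A1 a (fo ish (fo ilow a)) (eta a))) \<and>
     \<comment> \<open>i_* is an embedding onto the full subcategory of objects X with j^* X = 0\<close>
     full A1 A ilow \<and> faithful A1 A ilow \<and>
     (\<forall>x\<in>Ob A. zero_object A2 (fo jup x) \<longleftrightarrow> (\<exists>y\<in>Ob A1. iso_obj A (fo ilow y) x))"

end

theory Submission
  imports Defs
begin

text \<open>
  Call an object Z closed if its unit Z \<rightarrow> j_* j^* Z is invertible; the objects j_* y are closed,
  and j^* is fully faithful on morphisms into closed objects. Since j^* j_* \<cong> id and
  j^* F \<cong> F'' j^*, the functor F'' is isomorphic to j^* F j_*, and every object of B'' is
  j^* j_* of something; this gives essential surjectivity, and reduces fullness to the claim that
  F maps closed objects to closed objects.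

  For closed Z let \<eta> be the unit at F Z. Its kernel is killed by j^* (which is left exact and
  inverts \<eta>), so by (3) it is isomorphic to F a with j^* a = 0; since maps into Z are detected by
  j^*, the kernel maps to F Z by zero and \<eta> is mono. Lifting \<eta> along F gives a mono
  s : Z \<rightarrow> E with F E \<cong> j_* j^* F Z; its cokernel is again killed by j^* (which is right exact),
  so j^* s is invertible. Since both Z and F E are closed, s is invertible, hence so is \<eta>.
\<close>

section \<open>Categories\<close>

lemma ex1_unique: "\<exists>!x. P x \<Longrightarrow> P a \<Longrightarrow> P b \<Longrightarrow> a = b"
  by blast

definition inv_mor :: "('o, 'm) cat \<Rightarrow> 'o \<Rightarrow> 'o \<Rightarrow> 'm \<Rightarrow> 'm" where
  "inv_mor C a b f = (SOME g. g \<in> Hom C b a \<and> cmp C g f = ide C a \<and> cmp C f g = ide C b)"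

lemma inv_morD:
  assumes "iso_mor C a b f"
  shows "inv_mor C a b f \<in> Hom C b a" "cmp C (inv_mor C a b f) f = ide C a"
    "cmp C f (inv_mor C a b f) = ide C b"
proof -
  have "\<exists>g. g \<in> Hom C b a \<and> cmp C g f = ide C a \<and> cmp C f g = ide C b"
    using assms unfolding iso_mor_def by blast
  from someI_ex[OF this] show "inv_mor C a b f \<in> Hom C b a" "cmp C (inv_mor C a b f) f = ide C a"
    "cmp C f (inv_mor C a b f) = ide C b"
    unfolding inv_mor_def by blast+
qed

lemma iso_mor_hom: "iso_mor C a b f \<Longrightarrow> f \<in> Hom C a b"
  unfolding iso_mor_def by blast

lemma iso_mor_inv: "iso_mor C a b f \<Longrightarrow> iso_mor C b a (inv_mor C a b f)"
  unfolding iso_mor_def[of C b a] using inv_morD[of C a b f] iso_mor_hom[of C a b f] by blast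

lemma iso_obj_sym: "iso_obj C a b \<Longrightarrow> iso_obj C b a"
  unfolding iso_obj_def by (metis iso_mor_inv)

lemma monoD: "mono C a b m \<Longrightarrow> x \<in> Ob C \<Longrightarrow> u \<in> Hom C x a \<Longrightarrow> v \<in> Hom C x a \<Longrightarrow>
    cmp C m u = cmp C m v \<Longrightarrow> u = v"
  unfolding mono_def by blast

lemma epiD: "epi C a b e \<Longrightarrow> x \<in> Ob C \<Longrightarrow> u \<in> Hom C b x \<Longrightarrow> v \<in> Hom C b x \<Longrightarrow>
    cmp C u e = cmp C v e \<Longrightarrow> u = v"
  unfolding epi_def by blast

lemma mono_hom: "mono C a b m \<Longrightarrow> m \<in> Hom C a b"
  unfolding mono_def by blast

lemma epi_hom: "epi C a b e \<Longrightarrow> e \<in> Hom C a b"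
  unfolding epi_def by blast

lemma zero_mor_hom: "zero_mor C a b f \<Longrightarrow> f \<in> Hom C a b"
  unfolding zero_mor_def by blast

lemma zero_object_ob: "zero_object C z \<Longrightarrow> z \<in> Ob C"
  unfolding zero_object_def by blast

lemma zero_object_from_unique:
  "zero_object C z \<Longrightarrow> f \<in> Hom C z b \<Longrightarrow> g \<in> Hom C z b \<Longrightarrow> b \<in> Ob C \<Longrightarrow> f = g"
  unfolding zero_object_def by blast

lemma zero_object_to_unique:
  "zero_object C z \<Longrightarrow> f \<in> Hom C b z \<Longrightarrow> g \<in> Hom C b z \<Longrightarrow> b \<in> Ob C \<Longrightarrow> f = g"
  unfolding zero_object_def by blast

lemma zero_object_from_ex: "zero_object C z \<Longrightarrow> b \<in> Ob C \<Longrightarrow> \<exists>f. f \<in> Hom C z b"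
  unfolding zero_object_def by blast

lemma zero_object_to_ex: "zero_object C z \<Longrightarrow> b \<in> Ob C \<Longrightarrow> \<exists>f. f \<in> Hom C b z"
  unfolding zero_object_def by blast

lemma is_kernelD:
  assumes "is_kernel C a b f K k"
  shows "K \<in> Ob C" "k \<in> Hom C K a" "zero_mor C K b (cmp C f k)"
  using assms unfolding is_kernel_def by blast+

lemma is_kernel_factor:
  "is_kernel C a b f K k \<Longrightarrow> c \<in> Ob C \<Longrightarrow> g \<in> Hom C c a \<Longrightarrow> zero_mor C c b (cmp C f g) \<Longrightarrow>
    \<exists>u. u \<in> Hom C c K \<and> cmp C k u = g"
  unfolding is_kernel_def by blast

lemma is_cokernelD:
  assumes "is_cokernel C a b f Q q"
  shows "Q \<in> Ob C" "q \<in> Hom C b Q" "zero_mor C a Q (cmp C q f)"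
  using assms unfolding is_cokernel_def by blast+

lemma is_cokernel_factor:
  "is_cokernel C a b f Q q \<Longrightarrow> c \<in> Ob C \<Longrightarrow> g \<in> Hom C b c \<Longrightarrow> zero_mor C a c (cmp C g f) \<Longrightarrow>
    \<exists>u. u \<in> Hom C Q c \<and> cmp C u q = g"
  unfolding is_cokernel_def by blast

lemma is_kernel_unique:
  assumes "is_kernel C a b f K k" "c \<in> Ob C" "g \<in> Hom C c a" "zero_mor C c b (cmp C f g)"
    and "u \<in> Hom C c K" "cmp C k u = g" "v \<in> Hom C c K" "cmp C k v = g"
  shows "u = v"
proof -
  have "\<exists>!u. u \<in> Hom C c K \<and> cmp C k u = g" using assms(1-4) unfolding is_kernel_def by blast
  then show ?thesis using assms(5-8) by blast
qed

lemma is_cokernel_unique: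
  assumes "is_cokernel C a b f Q q" "c \<in> Ob C" "g \<in> Hom C b c" "zero_mor C a c (cmp C g f)"
    and "u \<in> Hom C Q c" "cmp C u q = g" "v \<in> Hom C Q c" "cmp C v q = g"
  shows "u = v"
proof -
  have "\<exists>!u. u \<in> Hom C Q c \<and> cmp C u q = g" using assms(1-4) unfolding is_cokernel_def by blast
  then show ?thesis using assms(5-8) by blast
qed

locale cat =
  fixes C :: "('o, 'm) cat"
  assumes category: "category C"
begin

lemma ide_hom [intro, simp]: "a \<in> Ob C \<Longrightarrow> ide C a \<in> Hom C a a"
  using category unfolding category_def by blast

lemma comp_hom [intro]:
  "f \<in> Hom C a b \<Longrightarrow> g \<in> Hom C b c \<Longrightarrow> a \<in> Ob C \<Longrightarrow> b \<in> Ob C \<Longrightarrow> c \<in> Ob C \<Longrightarrow>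
    cmp C g f \<in> Hom C a c"
  using category unfolding category_def by blast

lemma comp_ide_left [simp]: "f \<in> Hom C a b \<Longrightarrow> a \<in> Ob C \<Longrightarrow> b \<in> Ob C \<Longrightarrow> cmp C (ide C b) f = f"
  using category unfolding category_def by blast

lemma comp_ide_right [simp]: "f \<in> Hom C a b \<Longrightarrow> a \<in> Ob C \<Longrightarrow> b \<in> Ob C \<Longrightarrow> cmp C f (ide C a) = f"
  using category unfolding category_def by blast

lemma comp_assoc:
  "f \<in> Hom C a b \<Longrightarrow> g \<in> Hom C b c \<Longrightarrow> h \<in> Hom C c d \<Longrightarrow>
    a \<in> Ob C \<Longrightarrow> b \<in> Ob C \<Longrightarrow> c \<in> Ob C \<Longrightarrow> d \<in> Ob C \<Longrightarrow>
    cmp C h (cmp C g f) = cmp C (cmp C h g) f"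
  using category unfolding category_def by blast

lemma iso_cancel_left:
  assumes f: "iso_mor C a b f" and u: "u \<in> Hom C x a" and v: "v \<in> Hom C x a"
    and eq: "cmp C f u = cmp C f v" and ob: "x \<in> Ob C" "a \<in> Ob C" "b \<in> Ob C"
  shows "u = v"
proof -
  note i = inv_morD[OF f] iso_mor_hom[OF f]
  have "u = cmp C (cmp C (inv_mor C a b f) f) u" using i u ob by simp
  also have "\<dots> = cmp C (inv_mor C a b f) (cmp C f u)" using comp_assoc[OF u i(4) i(1) ob(1,2,3,2)] by simp
  also have "\<dots> = cmp C (cmp C (inv_mor C a b f) f) v" using eq comp_assoc[OF v i(4) i(1) ob(1,2,3,2)] by simp
  also have "\<dots> = v" using i v ob by simp
  finally show ?thesis .
qed

lemma iso_cancel_right: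
  assumes f: "iso_mor C a b f" and u: "u \<in> Hom C b x" and v: "v \<in> Hom C b x"
    and eq: "cmp C u f = cmp C v f" and ob: "x \<in> Ob C" "a \<in> Ob C" "b \<in> Ob C"
  shows "u = v"
proof -
  note i = inv_morD[OF f] iso_mor_hom[OF f]
  have "u = cmp C u (cmp C f (inv_mor C a b f))" using i u ob by simp
  also have "\<dots> = cmp C (cmp C u f) (inv_mor C a b f)" using comp_assoc[OF i(1) i(4) u ob(3,2,3,1)] by simp
  also have "\<dots> = cmp C v (cmp C f (inv_mor C a b f))" using eq comp_assoc[OF i(1) i(4) v ob(3,2,3,1)] by simp
  also have "\<dots> = v" using i v ob by simp
  finally show ?thesis .
qed

lemma iso_ide: "a \<in> Ob C \<Longrightarrow> iso_mor C a a (ide C a)"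
  unfolding iso_mor_def by (metis ide_hom comp_ide_left)

lemma iso_comp:
  assumes f: "iso_mor C a b f" and g: "iso_mor C b c g" and ob: "a \<in> Ob C" "b \<in> Ob C" "c \<in> Ob C"
  shows "iso_mor C a c (cmp C g f)"
proof -
  define f' where "f' = inv_mor C a b f"
  define g' where "g' = inv_mor C b c g"
  have h: "f \<in> Hom C a b" "g \<in> Hom C b c" "f' \<in> Hom C b a" "g' \<in> Hom C c b"
    "cmp C f' f = ide C a" "cmp C f f' = ide C b" "cmp C g' g = ide C b" "cmp C g g' = ide C c"
    using inv_morD[OF f] inv_morD[OF g] iso_mor_hom[OF f] iso_mor_hom[OF g] f'_def g'_def by auto
  have gf: "cmp C g f \<in> Hom C a c" and fg': "cmp C f' g' \<in> Hom C c a" using h ob by blast+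
  have "cmp C (cmp C f' g') (cmp C g f) = cmp C f' (cmp C (cmp C g' g) f)"
    using comp_assoc[OF gf h(4) h(3) ob(1,3,2,1)] comp_assoc[OF h(1) h(2) h(4) ob(1,2,3,2)] by simp
  also have "\<dots> = ide C a" using h ob by simp
  finally have 1: "cmp C (cmp C f' g') (cmp C g f) = ide C a" .
  have "cmp C (cmp C g f) (cmp C f' g') = cmp C g (cmp C (cmp C f f') g')"
    using comp_assoc[OF fg' h(1) h(2) ob(3,1,2,3)] comp_assoc[OF h(4) h(3) h(1) ob(3,2,1,2)] by simp
  also have "\<dots> = ide C c" using h ob by simp
  finally have 2: "cmp C (cmp C g f) (cmp C f' g') = ide C c" .
  show ?thesis unfolding iso_mor_def using 1 2 gf fg' by blast
qed

lemma iso_obj_refl: "a \<in> Ob C \<Longrightarrow> iso_obj C a a"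
  unfolding iso_obj_def using iso_ide by blast

lemma iso_obj_trans:
  "iso_obj C a b \<Longrightarrow> iso_obj C b c \<Longrightarrow> a \<in> Ob C \<Longrightarrow> b \<in> Ob C \<Longrightarrow> c \<in> Ob C \<Longrightarrow> iso_obj C a c"
  unfolding iso_obj_def using iso_comp by blast

lemma section_of_iso_is_iso:
  assumes f: "iso_mor C b a f" and g: "g \<in> Hom C a b" and fg: "cmp C f g = ide C a"
    and ob: "a \<in> Ob C" "b \<in> Ob C"
  shows "iso_mor C a b g"
proof -
  note i = inv_morD[OF f] iso_mor_hom[OF f]
  have "g = cmp C (cmp C (inv_mor C b a f) f) g" using i g ob by simp
  also have "\<dots> = inv_mor C b a f" using comp_assoc[OF g i(4) i(1) ob(1,2,1,2)] fg i ob by simp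
  finally show ?thesis using iso_mor_inv[OF f] by simp
qed

lemma zero_morI:
  "zero_object C z \<Longrightarrow> g \<in> Hom C a z \<Longrightarrow> h \<in> Hom C z b \<Longrightarrow> a \<in> Ob C \<Longrightarrow> b \<in> Ob C \<Longrightarrow>
    zero_mor C a b (cmp C h g)"
  unfolding zero_mor_def by (metis zero_object_ob comp_hom)

lemma zero_mor_ex: "zero_object C z \<Longrightarrow> a \<in> Ob C \<Longrightarrow> b \<in> Ob C \<Longrightarrow> \<exists>f. zero_mor C a b f"
  by (meson zero_object_from_ex zero_morI zero_object_to_ex)

lemma zero_mor_comp_left:
  assumes f: "zero_mor C a b f" and k: "k \<in> Hom C b c" and ob: "a \<in> Ob C" "b \<in> Ob C" "c \<in> Ob C"
  shows "zero_mor C a c (cmp C k f)"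
proof -
  obtain z g h where z: "zero_object C z" "g \<in> Hom C a z" "h \<in> Hom C z b" "f = cmp C h g"
    using f unfolding zero_mor_def by blast
  have zo: "z \<in> Ob C" using zero_object_ob[OF z(1)] .
  have "cmp C k f = cmp C (cmp C k h) g" using z comp_assoc[OF z(2) z(3) k] zo ob by simp
  moreover have "cmp C k h \<in> Hom C z c" using z(3) k zo ob by blast
  ultimately show ?thesis using z ob zero_morI by simp
qed

lemma zero_mor_comp_right:
  assumes f: "zero_mor C b c f" and k: "k \<in> Hom C a b" and ob: "a \<in> Ob C" "b \<in> Ob C" "c \<in> Ob C"
  shows "zero_mor C a c (cmp C f k)"
proof -
  obtain z g h where z: "zero_object C z" "g \<in> Hom C b z" "h \<in> Hom C z c" "f = cmp C h g"
    using f unfolding zero_mor_def by blast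
  have zo: "z \<in> Ob C" using zero_object_ob[OF z(1)] .
  have "cmp C f k = cmp C h (cmp C g k)" using z comp_assoc[OF k z(2) z(3)] zo ob by simp
  moreover have "cmp C g k \<in> Hom C a z" using z(2) k zo ob by blast
  ultimately show ?thesis using z ob zero_morI by simp
qed

lemma retract_of_zero_object:
  assumes z: "zero_object C z" and g: "g \<in> Hom C x z" and g': "g' \<in> Hom C z x"
    and gg: "cmp C g' g = ide C x" and x: "x \<in> Ob C"
  shows "zero_object C x"
proof -
  have zo: "z \<in> Ob C" using zero_object_ob[OF z] .
  have unique: "(\<exists>!f. f \<in> Hom C x b) \<and> (\<exists>!f. f \<in> Hom C b x)" if b: "b \<in> Ob C" for b
  proof
    obtain fz where fz: "fz \<in> Hom C z b" using zero_object_from_ex[OF z b] by blast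
    have "f = cmp C fz g" if f: "f \<in> Hom C x b" for f
    proof -
      have "cmp C f g' = fz" using zero_object_from_unique[OF z comp_hom[OF g' f zo x b] fz b] .
      then have "cmp C f (cmp C g' g) = cmp C fz g" using comp_assoc[OF g g' f x zo x b] by simp
      then show ?thesis using gg f x b by simp
    qed
    then show "\<exists>!f. f \<in> Hom C x b" using comp_hom[OF g fz x zo b] by (rule ex1I[rotated])
  next
    obtain tz where tz: "tz \<in> Hom C b z" using zero_object_to_ex[OF z b] by blast
    have "f = cmp C g' tz" if f: "f \<in> Hom C b x" for f
    proof -
      have "cmp C g f = tz" using zero_object_to_unique[OF z comp_hom[OF f g b x zo] tz b] .
      then have "cmp C (cmp C g' g) f = cmp C g' tz" using comp_assoc[OF f g g' b x zo x] by simp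
      then show ?thesis using gg f x b by simp
    qed
    then show "\<exists>!f. f \<in> Hom C b x" using comp_hom[OF tz g' b zo x] by (rule ex1I[rotated])
  qed
  show ?thesis unfolding zero_object_def using x unique by simp
qed

lemma iso_obj_zero_object:
  assumes z: "zero_object C z" and xz: "iso_obj C x z" and x: "x \<in> Ob C"
  shows "zero_object C x"
proof -
  obtain f where f: "iso_mor C x z f" using xz unfolding iso_obj_def by blast
  show ?thesis using retract_of_zero_object[OF z iso_mor_hom[OF f] inv_morD(1,2)[OF f] x] .
qed

lemma zero_object_if_zero_mono:
  assumes m: "mono C x a m" and zm: "zero_mor C x a m" and ob: "x \<in> Ob C" "a \<in> Ob C"
  shows "zero_object C x"
proof -
  obtain z g h where z: "zero_object C z" "g \<in> Hom C x z" "h \<in> Hom C z a" "m = cmp C h g"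
    using zm unfolding zero_mor_def by blast
  have zo: "z \<in> Ob C" using zero_object_ob[OF z(1)] .
  obtain g' where g': "g' \<in> Hom C z x" using zero_object_from_ex[OF z(1) ob(1)] by blast
  have gg: "cmp C g' g \<in> Hom C x x" using comp_hom[OF z(2) g' ob(1) zo ob(1)] .
  have "cmp C g (cmp C g' g) = g"
    using zero_object_to_unique[OF z(1) comp_hom[OF gg z(2) ob(1) ob(1) zo] z(2) ob(1)] .
  then have "cmp C m (cmp C g' g) = cmp C m (ide C x)"
    using z(4) comp_assoc[OF gg z(2) z(3) ob(1) ob(1) zo ob(2)] zo ob mono_hom[OF m] by simp
  then have "cmp C g' g = ide C x" by (rule monoD[OF m ob(1) gg ide_hom[OF ob(1)]])
  then show ?thesis using retract_of_zero_object[OF z(1,2) g' _ ob(1)] by simp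
qed

lemma zero_object_if_zero_epi:
  assumes e: "epi C a x e" and ze: "zero_mor C a x e" and ob: "x \<in> Ob C" "a \<in> Ob C"
  shows "zero_object C x"
proof -
  obtain z g h where z: "zero_object C z" "g \<in> Hom C a z" "h \<in> Hom C z x" "e = cmp C h g"
    using ze unfolding zero_mor_def by blast
  have zo: "z \<in> Ob C" using zero_object_ob[OF z(1)] .
  obtain h' where h': "h' \<in> Hom C x z" using zero_object_to_ex[OF z(1) ob(1)] by blast
  have hh: "cmp C h h' \<in> Hom C x x" using comp_hom[OF h' z(3) ob(1) zo ob(1)] .
  have "cmp C (cmp C h h') h = h"
    using zero_object_from_unique[OF z(1) comp_hom[OF z(3) hh zo ob(1) ob(1)] z(3) ob(1)] .
  then have "cmp C (cmp C h h') e = cmp C (ide C x) e"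
    using z(4) comp_assoc[OF z(2) z(3) hh ob(2) zo ob(1) ob(1)] zo ob epi_hom[OF e] by simp
  then have "cmp C h h' = ide C x" by (rule epiD[OF e ob(1) hh ide_hom[OF ob(1)]])
  then show ?thesis using retract_of_zero_object[OF z(1) h' z(3) _ ob(1)] by simp
qed

lemma terminal_zero_object:
  assumes z: "zero_object C z" and t: "t \<in> Ob C" and trm: "\<forall>b\<in>Ob C. \<exists>!f. f \<in> Hom C b t"
  shows "zero_object C t"
proof -
  have zo: "z \<in> Ob C" using zero_object_ob[OF z] .
  obtain g where g: "g \<in> Hom C z t" using zero_object_from_ex[OF z t] by blast
  obtain g' where g': "g' \<in> Hom C t z" using zero_object_to_ex[OF z t] by blast
  have "cmp C g g' = ide C t"
    using ex1_unique[OF trm[rule_format, OF t] comp_hom[OF g' g t zo t] ide_hom[OF t]] .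
  then show ?thesis using retract_of_zero_object[OF z g' g _ t] by blast
qed

lemma initial_zero_object:
  assumes z: "zero_object C z" and t: "t \<in> Ob C" and ini: "\<forall>b\<in>Ob C. \<exists>!f. f \<in> Hom C t b"
  shows "zero_object C t"
proof -
  have zo: "z \<in> Ob C" using zero_object_ob[OF z] .
  obtain g where g: "g \<in> Hom C z t" using zero_object_from_ex[OF z t] by blast
  obtain g' where g': "g' \<in> Hom C t z" using zero_object_to_ex[OF z t] by blast
  have "cmp C g g' = ide C t"
    using ex1_unique[OF ini[rule_format, OF t] comp_hom[OF g' g t zo t] ide_hom[OF t]] .
  then show ?thesis using retract_of_zero_object[OF z g' g _ t] by blast
qed

lemma kernel_mono:
  assumes k: "is_kernel C a b f K k" and ob: "a \<in> Ob C" "b \<in> Ob C"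
  shows "mono C K a k"
proof -
  note kk = is_kernelD[OF k]
  have f: "f \<in> Hom C a b" using k unfolding is_kernel_def by blast
  have cancel: "u = v" if c: "c \<in> Ob C" and u: "u \<in> Hom C c K" and v: "v \<in> Hom C c K"
    and e: "cmp C k u = cmp C k v" for c u v
  proof -
    have ku: "cmp C k u \<in> Hom C c a" using u kk c ob by blast
    have "zero_mor C c b (cmp C (cmp C f k) u)" using zero_mor_comp_right kk u c ob by blast
    then have z: "zero_mor C c b (cmp C f (cmp C k u))" using comp_assoc[OF u _ f c] kk ob by simp
    show "u = v" using is_kernel_unique[OF k c ku z u refl v e[symmetric]] .
  qed
  show ?thesis unfolding mono_def using kk cancel by auto
qed

lemma cokernel_epi:
  assumes q: "is_cokernel C a b f Q q" and ob: "a \<in> Ob C" "b \<in> Ob C"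
  shows "epi C b Q q"
proof -
  note qq = is_cokernelD[OF q]
  have f: "f \<in> Hom C a b" using q unfolding is_cokernel_def by blast
  have cancel: "u = v" if c: "c \<in> Ob C" and u: "u \<in> Hom C Q c" and v: "v \<in> Hom C Q c"
    and e: "cmp C u q = cmp C v q" for c u v
  proof -
    have uq: "cmp C u q \<in> Hom C b c" using u qq c ob by blast
    have "zero_mor C a c (cmp C u (cmp C q f))" using zero_mor_comp_left qq u c ob by blast
    then have z: "zero_mor C a c (cmp C (cmp C u q) f)" using comp_assoc[OF f _ u] qq c ob by simp
    show "u = v" using is_cokernel_unique[OF q c uq z u refl v e[symmetric]] .
  qed
  show ?thesis unfolding epi_def using qq cancel by auto
qed

lemma mono_if_retraction:
  assumes m: "m \<in> Hom C a b" and r: "r \<in> Hom C b a" and rm: "cmp C r m = ide C a"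
    and ob: "a \<in> Ob C" "b \<in> Ob C"
  shows "mono C a b m"
proof -
  have "u = v" if x: "x \<in> Ob C" and u: "u \<in> Hom C x a" and v: "v \<in> Hom C x a"
    and e: "cmp C m u = cmp C m v" for x u v
  proof -
    have "cmp C (cmp C r m) u = cmp C (cmp C r m) v"
      using e comp_assoc[OF u m r x ob ob(1)] comp_assoc[OF v m r x ob ob(1)] by simp
    then show ?thesis using rm u v x ob by simp
  qed
  then show ?thesis unfolding mono_def using m by blast
qed

lemma iso_mono:
  assumes f: "iso_mor C a b f" and ob: "a \<in> Ob C" "b \<in> Ob C"
  shows "mono C a b f"
  by (rule mono_if_retraction[OF iso_mor_hom[OF f] inv_morD(1,2)[OF f] ob])

lemma mono_comp:
  assumes f: "mono C a b f" and g: "mono C b c g" and ob: "a \<in> Ob C" "b \<in> Ob C" "c \<in> Ob C"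
  shows "mono C a c (cmp C g f)"
proof -
  have fh: "f \<in> Hom C a b" and gh: "g \<in> Hom C b c" using mono_hom[OF f] mono_hom[OF g] .
  have cancel: "u = v" if x: "x \<in> Ob C" and u: "u \<in> Hom C x a" and v: "v \<in> Hom C x a"
    and e: "cmp C (cmp C g f) u = cmp C (cmp C g f) v" for x u v
  proof -
    have "cmp C g (cmp C f u) = cmp C g (cmp C f v)"
      using e comp_assoc[OF u fh gh x ob] comp_assoc[OF v fh gh x ob] by simp
    then have "cmp C f u = cmp C f v"
      using monoD[OF g x comp_hom[OF u fh x ob(1,2)] comp_hom[OF v fh x ob(1,2)]] by blast
    then show "u = v" using monoD[OF f x u v] by blast
  qed
  show ?thesis unfolding mono_def using comp_hom[OF fh gh ob] cancel by auto
qed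

end

section \<open>Abelian categories\<close>

locale ab_cat = cat +
  assumes abelian: "abelian C"
begin

lemma abelian_axioms:
  "\<exists>z. zero_object C z"
  "\<forall>a\<in>Ob C. \<forall>b\<in>Ob C. has_product C a b \<and> has_coproduct C a b"
  "\<forall>a\<in>Ob C. \<forall>b\<in>Ob C. \<forall>f\<in>Hom C a b. (\<exists>K k. is_kernel C a b f K k) \<and> (\<exists>Q q. is_cokernel C a b f Q q)"
  "\<forall>a\<in>Ob C. \<forall>b\<in>Ob C. \<forall>f. mono C a b f \<longrightarrow> (\<exists>c\<in>Ob C. \<exists>g\<in>Hom C b c. is_kernel C b c g a f)"
  "\<forall>a\<in>Ob C. \<forall>b\<in>Ob C. \<forall>f. epi C a b f \<longrightarrow> (\<exists>c\<in>Ob C. \<exists>g\<in>Hom C c a. is_cokernel C c a g b f)"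
  using conjunct1[OF conjunct2[OF abelian[unfolded abelian_def]]]
    conjunct1[OF conjunct2[OF conjunct2[OF abelian[unfolded abelian_def]]]]
    conjunct1[OF conjunct2[OF conjunct2[OF conjunct2[OF abelian[unfolded abelian_def]]]]]
    conjunct1[OF conjunct2[OF conjunct2[OF conjunct2[OF conjunct2[OF abelian[unfolded abelian_def]]]]]]
    conjunct2[OF conjunct2[OF conjunct2[OF conjunct2[OF conjunct2[OF abelian[unfolded abelian_def]]]]]]
  by - (assumption)+

lemma has_kernel:
  assumes "f \<in> Hom C a b" "a \<in> Ob C" "b \<in> Ob C"
  obtains K k where "is_kernel C a b f K k"
  using abelian_axioms(3) assms by blast

lemma has_cokernel:
  assumes "f \<in> Hom C a b" "a \<in> Ob C" "b \<in> Ob C"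
  obtains Q q where "is_cokernel C a b f Q q"
  using abelian_axioms(3) assms by blast

lemma mono_is_kernel:
  assumes "mono C a b f" "a \<in> Ob C" "b \<in> Ob C"
  obtains c g where "c \<in> Ob C" "g \<in> Hom C b c" "is_kernel C b c g a f"
  using abelian_axioms(4) assms by blast

lemma epi_is_cokernel:
  assumes "epi C a b f" "a \<in> Ob C" "b \<in> Ob C"
  obtains c g where "c \<in> Ob C" "g \<in> Hom C c a" "is_cokernel C c a g b f"
  using abelian_axioms(5) assms by blast

lemma has_product:
  assumes "a \<in> Ob C" "b \<in> Ob C"
  obtains p p1 p2 where "p \<in> Ob C" "p1 \<in> Hom C p a" "p2 \<in> Hom C p b"
    "\<forall>c\<in>Ob C. \<forall>f\<in>Hom C c a. \<forall>g\<in>Hom C c b.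
       \<exists>!u. u \<in> Hom C c p \<and> cmp C p1 u = f \<and> cmp C p2 u = g"
proof -
  have "has_product C a b" using abelian_axioms(2) assms by blast
  then show ?thesis using that unfolding has_product_def by blast
qed

text \<open>d is a morphism whose kernel is the diagonal c \<rightarrow> c \<times> c.\<close>

lemma equality_detector:
  assumes c: "c \<in> Ob C"
  obtains P p1 p2 D d where "P \<in> Ob C" "p1 \<in> Hom C P c" "p2 \<in> Hom C P c" "D \<in> Ob C" "d \<in> Hom C P D"
    "\<forall>a\<in>Ob C. \<forall>f\<in>Hom C a c. \<forall>g\<in>Hom C a c.
       \<exists>!u. u \<in> Hom C a P \<and> cmp C p1 u = f \<and> cmp C p2 u = g"
    "\<And>a u. a \<in> Ob C \<Longrightarrow> u \<in> Hom C a P \<Longrightarrow>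
       zero_mor C a D (cmp C d u) \<longleftrightarrow> cmp C p1 u = cmp C p2 u"
proof -
  obtain P p1 p2 where P: "P \<in> Ob C" and p: "p1 \<in> Hom C P c" "p2 \<in> Hom C P c"
    and PU: "\<forall>a\<in>Ob C. \<forall>f\<in>Hom C a c. \<forall>g\<in>Hom C a c.
       \<exists>!u. u \<in> Hom C a P \<and> cmp C p1 u = f \<and> cmp C p2 u = g"
    using has_product[OF c c] by blast
  obtain dl where dl: "dl \<in> Hom C c P" "cmp C p1 dl = ide C c" "cmp C p2 dl = ide C c"
    using PU[rule_format, OF c ide_hom[OF c] ide_hom[OF c]] by blast
  obtain D d where D: "D \<in> Ob C" and d: "d \<in> Hom C P D" and kd: "is_kernel C P D d c dl"
    using mono_is_kernel[OF mono_if_retraction[OF dl(1) p(1) dl(2) c P] c P] by blast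
  have "zero_mor C a D (cmp C d u) \<longleftrightarrow> cmp C p1 u = cmp C p2 u"
    if a: "a \<in> Ob C" and u: "u \<in> Hom C a P" for a u
  proof
    assume "zero_mor C a D (cmp C d u)"
    then obtain v where v: "v \<in> Hom C a c" "cmp C dl v = u" using is_kernel_factor[OF kd a u] by blast
    have "cmp C pi u = v" if "pi \<in> Hom C P c" "cmp C pi dl = ide C c" for pi
      using v comp_assoc[OF v(1) dl(1) that(1) a c P c] that a c by simp
    then show "cmp C p1 u = cmp C p2 u" using p dl by simp
  next
    assume eq: "cmp C p1 u = cmp C p2 u"
    have p1u: "cmp C p1 u \<in> Hom C a c" using comp_hom[OF u p(1) a P c] .
    have "cmp C pi (cmp C dl (cmp C p1 u)) = cmp C p1 u" if "pi \<in> Hom C P c" "cmp C pi dl = ide C c" for pi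
      using comp_assoc[OF p1u dl(1) that(1) a c P c] that p1u a c by simp
    then have "cmp C dl (cmp C p1 u) = u"
      by (intro ex1_unique[OF PU[rule_format, OF a p1u p1u]])
        (use comp_hom[OF p1u dl(1) a c P] u p dl eq in auto)
    moreover have "zero_mor C a D (cmp C (cmp C d dl) (cmp C p1 u))"
      using zero_mor_comp_right[OF is_kernelD(3)[OF kd] p1u a c D] .
    ultimately show "zero_mor C a D (cmp C d u)"
      using comp_assoc[OF p1u dl(1) d a c P D] by simp
  qed
  then show ?thesis using that P p D d PU by blast
qed

lemma has_equalizer:
  assumes x: "x \<in> Hom C I c" and y: "y \<in> Hom C I c" and ob: "I \<in> Ob C" "c \<in> Ob C"
  obtains W w where "W \<in> Ob C" "w \<in> Hom C W I" "mono C W I w" "cmp C x w = cmp C y w"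
    "\<And>a t. a \<in> Ob C \<Longrightarrow> t \<in> Hom C a I \<Longrightarrow> cmp C x t = cmp C y t \<Longrightarrow>
       \<exists>u. u \<in> Hom C a W \<and> cmp C w u = t"
proof -
  obtain P p1 p2 D d where P: "P \<in> Ob C" and p: "p1 \<in> Hom C P c" "p2 \<in> Hom C P c"
    and D: "D \<in> Ob C" and d: "d \<in> Hom C P D"
    and PU: "\<forall>a\<in>Ob C. \<forall>f\<in>Hom C a c. \<forall>g\<in>Hom C a c.
       \<exists>!u. u \<in> Hom C a P \<and> cmp C p1 u = f \<and> cmp C p2 u = g"
    and detect: "\<And>a u. a \<in> Ob C \<Longrightarrow> u \<in> Hom C a P \<Longrightarrow>
       zero_mor C a D (cmp C d u) \<longleftrightarrow> cmp C p1 u = cmp C p2 u"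
    using equality_detector[OF ob(2)] by blast
  obtain s where s: "s \<in> Hom C I P" "cmp C p1 s = x" "cmp C p2 s = y"
    using PU[rule_format, OF ob(1) x y] by blast
  have ds: "cmp C d s \<in> Hom C I D" using comp_hom[OF s(1) d ob(1) P D] .
  obtain W w where kw: "is_kernel C I D (cmp C d s) W w" using has_kernel[OF ds ob(1) D] by blast
  note W = is_kernelD[OF kw]
  have kills: "zero_mor C a D (cmp C (cmp C d s) t) \<longleftrightarrow> cmp C x t = cmp C y t"
    if a: "a \<in> Ob C" and t: "t \<in> Hom C a I" for a t
    using detect[OF a comp_hom[OF t s(1) a ob(1) P]] comp_assoc[OF t s(1) d a ob(1) P D]
      comp_assoc[OF t s(1) p(1) a ob(1) P ob(2)] comp_assoc[OF t s(1) p(2) a ob(1) P ob(2)] s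
    by simp
  show ?thesis
  proof (rule that)
    show "cmp C x w = cmp C y w" using kills[OF W(1,2)] W(3) by blast
    show "\<exists>u. u \<in> Hom C a W \<and> cmp C w u = t"
      if "a \<in> Ob C" "t \<in> Hom C a I" "cmp C x t = cmp C y t" for a t
      using is_kernel_factor[OF kw that(1,2)] kills[OF that(1,2)] that(3) by blast
  qed (use W kernel_mono[OF kw ob(1) D] in \<open>blast+\<close>)
qed

text \<open>If x e = y e, then e factors through the equalizer w of x and y. So f factors through the
  mono m w, which is the kernel of some h; h kills f, so it factors through q and kills m. Thus m
  factors through m w, which makes w a split epi, and x = y.\<close>

lemma coimage_epi:
  assumes cq: "is_cokernel C a b f Q q" and km: "is_kernel C b Q q I m"
    and e: "e \<in> Hom C a I" and me: "cmp C m e = f" and ob: "a \<in> Ob C" "b \<in> Ob C"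
  shows "epi C a I e"
proof -
  note Q = is_cokernelD[OF cq] and I = is_kernelD[OF km]
  have m: "m \<in> Hom C I b" and mmono: "mono C I b m" using I kernel_mono[OF km ob(2)] Q by blast+
  have "x = y" if c: "c \<in> Ob C" and x: "x \<in> Hom C I c" and y: "y \<in> Hom C I c"
    and exy: "cmp C x e = cmp C y e" for c x y
  proof -
    obtain W w where W: "W \<in> Ob C" and w: "w \<in> Hom C W I" "mono C W I w" "cmp C x w = cmp C y w"
      and eqz: "\<And>a' t. a' \<in> Ob C \<Longrightarrow> t \<in> Hom C a' I \<Longrightarrow> cmp C x t = cmp C y t \<Longrightarrow>
        \<exists>u. u \<in> Hom C a' W \<and> cmp C w u = t"
      using has_equalizer[OF x y _ c] I by blast
    obtain e' where e': "e' \<in> Hom C a W" "cmp C w e' = e"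
      using eqz[OF ob(1) e] comp_assoc[OF e] exy by blast
    have mw: "mono C W b (cmp C m w)" using mono_comp[OF w(2) mmono W _ ob(2)] I by blast
    obtain c' h where c': "c' \<in> Ob C" and h: "h \<in> Hom C b c'" and kh: "is_kernel C b c' h W (cmp C m w)"
      using mono_is_kernel[OF mw W ob(2)] by blast
    have mwh: "cmp C m w \<in> Hom C W b" using mono_hom[OF mw] .
    have "cmp C h f = cmp C (cmp C h (cmp C m w)) e'"
      using me e' comp_assoc[OF e'(1) w(1) m ob(1) W _ ob(2)] comp_assoc[OF e'(1) mwh h ob(1) W ob(2) c'] I
      by simp
    then have "zero_mor C a c' (cmp C h f)"
      using zero_mor_comp_right[OF _ e'(1) ob(1) W c'] is_kernelD[OF kh] by simp
    then obtain h' where h': "h' \<in> Hom C Q c'" "cmp C h' q = h"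
      using is_cokernel_factor[OF cq c' h] by blast
    have "zero_mor C I c' (cmp C h' (cmp C q m))" using zero_mor_comp_left[OF _ h'(1) _ _ c'] I Q by blast
    then have "zero_mor C I c' (cmp C h m)" using comp_assoc[OF m _ h'(1) _ ob(2) _ c'] h' I Q by simp
    then obtain s' where s': "s' \<in> Hom C I W" "cmp C (cmp C m w) s' = m"
      using is_kernel_factor[OF kh _ m] I by blast
    have "cmp C m (cmp C w s') = cmp C m (ide C I)"
      using s' comp_assoc[OF s'(1) w(1) m _ W _ ob(2)] m I ob by simp
    then have ws': "cmp C w s' = ide C I"
      using monoD[OF mmono _ comp_hom[OF s'(1) w(1) _ W] ide_hom] I W by blast
    have "cmp C x (cmp C w s') = cmp C y (cmp C w s')"
      using comp_assoc[OF s'(1) w(1) x _ W _ c] comp_assoc[OF s'(1) w(1) y _ W _ c] w I W by simp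
    then show "x = y" using ws' x y I c by simp
  qed
  then show ?thesis unfolding epi_def using e by blast
qed

lemma mono_if_kernel_zero:
  assumes f: "f \<in> Hom C a b" and ob: "a \<in> Ob C" "b \<in> Ob C"
    and ker: "\<And>x t. x \<in> Ob C \<Longrightarrow> t \<in> Hom C x a \<Longrightarrow> zero_mor C x b (cmp C f t) \<Longrightarrow> zero_mor C x a t"
  shows "mono C a b f"
proof -
  obtain Q q where cq: "is_cokernel C a b f Q q" using has_cokernel[OF f ob] by blast
  note Q = is_cokernelD[OF cq]
  obtain I m where km: "is_kernel C b Q q I m" using has_kernel[OF _ ob(2)] Q by blast
  note I = is_kernelD[OF km]
  obtain e where e: "e \<in> Hom C a I" "cmp C m e = f" using is_kernel_factor[OF km ob(1) f] Q by blast
  have eepi: "epi C a I e" using coimage_epi[OF cq km e ob] .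
  obtain c0 g where c0: "c0 \<in> Ob C" and g: "g \<in> Hom C c0 a" and ce: "is_cokernel C c0 a g I e"
    using epi_is_cokernel[OF eepi ob(1)] I by blast
  have "zero_mor C c0 b (cmp C m (cmp C e g))"
    using zero_mor_comp_left[OF _ _ c0 _ ob(2)] is_cokernelD[OF ce] I by blast
  then have "zero_mor C c0 a g" using ker[OF c0 g] comp_assoc[OF g e(1) _ c0 ob(1) _ ob(2)] e I by simp
  then have "zero_mor C c0 a (cmp C (ide C a) g)" using g c0 ob by simp
  then obtain u where u: "u \<in> Hom C I a" "cmp C u e = ide C a"
    using is_cokernel_factor[OF ce ob(1) ide_hom[OF ob(1)]] by blast
  have "mono C a b (cmp C m e)"
    using mono_comp[OF mono_if_retraction[OF e(1) u ob(1)] kernel_mono[OF km ob(2)] ob(1)] Q I ob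
    by blast
  then show ?thesis using e by simp
qed

lemma iso_if_mono_and_killers_zero:
  assumes m: "mono C a b m" and ob: "a \<in> Ob C" "b \<in> Ob C"
    and K: "\<And>c h. c \<in> Ob C \<Longrightarrow> h \<in> Hom C b c \<Longrightarrow> zero_mor C a c (cmp C h m) \<Longrightarrow> zero_mor C b c h"
  shows "iso_mor C a b m"
proof -
  have mh: "m \<in> Hom C a b" using mono_hom[OF m] .
  obtain c h where c: "c \<in> Ob C" and h: "h \<in> Hom C b c" and kh: "is_kernel C b c h a m"
    using mono_is_kernel[OF m ob] by blast
  have "zero_mor C b c h" using K[OF c h] is_kernelD[OF kh] by blast
  then have "zero_mor C b c (cmp C h (ide C b))" using h ob c by simp
  then obtain u where u: "u \<in> Hom C b a" "cmp C m u = ide C b"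
    using is_kernel_factor[OF kh ob(2) ide_hom[OF ob(2)]] by blast
  have um: "cmp C u m \<in> Hom C a a" using comp_hom[OF mh u(1) ob ob(1)] .
  have "cmp C m (cmp C u m) = cmp C m (ide C a)" using comp_assoc[OF mh u(1) mh ob(1,2,1,2)] u mh ob by simp
  then have "cmp C u m = ide C a" by (rule monoD[OF m ob(1) um ide_hom[OF ob(1)]])
  then show ?thesis unfolding iso_mor_def using u mh by blast
qed

end

section \<open>Functors and natural transformations\<close>

lemma fcomp_simps [simp]: "fo (fcomp G F) = fo G \<circ> fo F" "fm (fcomp G F) = fm G \<circ> fm F"
  by (simp_all add: fcomp_def)

lemma fid_simps [simp]: "fo fid = id" "fm fid = id"
  by (simp_all add: fid_def)

lemma functor_ob: "is_functor C D F \<Longrightarrow> a \<in> Ob C \<Longrightarrow> fo F a \<in> Ob D"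
  unfolding is_functor_def by blast

lemma functor_hom:
  "is_functor C D F \<Longrightarrow> f \<in> Hom C a b \<Longrightarrow> a \<in> Ob C \<Longrightarrow> b \<in> Ob C \<Longrightarrow> fm F f \<in> Hom D (fo F a) (fo F b)"
  unfolding is_functor_def by blast

lemma functor_ide: "is_functor C D F \<Longrightarrow> a \<in> Ob C \<Longrightarrow> fm F (ide C a) = ide D (fo F a)"
  unfolding is_functor_def by blast

lemma functor_comp:
  "is_functor C D F \<Longrightarrow> f \<in> Hom C a b \<Longrightarrow> g \<in> Hom C b c \<Longrightarrow> a \<in> Ob C \<Longrightarrow> b \<in> Ob C \<Longrightarrow> c \<in> Ob C \<Longrightarrow>
    fm F (cmp C g f) = cmp D (fm F g) (fm F f)"
  unfolding is_functor_def by blast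

lemma is_functor_fcomp:
  assumes F: "is_functor C D F" and G: "is_functor D E G"
  shows "is_functor C E (fcomp G F)"
proof -
  have "fm G (cmp D (fm F g) (fm F f)) = cmp E (fm G (fm F g)) (fm G (fm F f))"
    if "a \<in> Ob C" "b \<in> Ob C" "c \<in> Ob C" "f \<in> Hom C a b" "g \<in> Hom C b c" for a b c f g
    using functor_comp[OF G functor_hom[OF F that(4,1,2)] functor_hom[OF F that(5,2,3)]]
      functor_ob[OF F] that by blast
  then show ?thesis
    unfolding is_functor_def
    by (simp add: functor_ob[OF F] functor_ob[OF G] functor_hom[OF F] functor_hom[OF G]
        functor_ide[OF F] functor_ide[OF G] functor_comp[OF F])
qed

lemma functor_iso:
  assumes F: "is_functor C D F" and f: "iso_mor C a b f" and ob: "a \<in> Ob C" "b \<in> Ob C"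
  shows "iso_mor D (fo F a) (fo F b) (fm F f)"
proof -
  note i = inv_morD[OF f] iso_mor_hom[OF f]
  have "cmp D (fm F (inv_mor C a b f)) (fm F f) = ide D (fo F a)"
    using functor_comp[OF F i(4) i(1) ob ob(1)] i functor_ide[OF F ob(1)] by simp
  moreover have "cmp D (fm F f) (fm F (inv_mor C a b f)) = ide D (fo F b)"
    using functor_comp[OF F i(1) i(4) ob(2) ob] i functor_ide[OF F ob(2)] by simp
  ultimately show ?thesis
    unfolding iso_mor_def using functor_hom[OF F i(1) ob(2,1)] functor_hom[OF F i(4) ob] by blast
qed

lemma functor_iso_obj:
  "is_functor C D F \<Longrightarrow> iso_obj C a b \<Longrightarrow> a \<in> Ob C \<Longrightarrow> b \<in> Ob C \<Longrightarrow> iso_obj D (fo F a) (fo F b)"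
  unfolding iso_obj_def by (metis functor_iso)

lemma functor_zero_mor:
  assumes F: "is_functor C D F" and C: "category C" and D: "category D"
    and Z: "\<And>z. zero_object C z \<Longrightarrow> zero_object D (fo F z)"
    and f: "zero_mor C a b f" and ob: "a \<in> Ob C" "b \<in> Ob C"
  shows "zero_mor D (fo F a) (fo F b) (fm F f)"
proof -
  interpret D: cat D using D by unfold_locales
  obtain z g h where z: "zero_object C z" "g \<in> Hom C a z" "h \<in> Hom C z b" "f = cmp C h g"
    using f unfolding zero_mor_def by blast
  have zo: "z \<in> Ob C" using zero_object_ob[OF z(1)] .
  have "fm F f = cmp D (fm F h) (fm F g)" using functor_comp[OF F z(2) z(3) ob(1) zo ob(2)] z(4) by simp
  then show ?thesis
    using D.zero_morI[OF Z[OF z(1)] functor_hom[OF F z(2) ob(1) zo] functor_hom[OF F z(3) zo ob(2)]]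
      functor_ob[OF F] ob by simp
qed

lemma nat_trans_hom: "nat_trans C D F G eta \<Longrightarrow> a \<in> Ob C \<Longrightarrow> eta a \<in> Hom D (fo F a) (fo G a)"
  unfolding nat_trans_def by blast

lemma nat_trans_naturality:
  "nat_trans C D F G eta \<Longrightarrow> f \<in> Hom C a b \<Longrightarrow> a \<in> Ob C \<Longrightarrow> b \<in> Ob C \<Longrightarrow>
    cmp D (eta b) (fm F f) = cmp D (fm G f) (eta a)"
  unfolding nat_trans_def by blast

lemma nat_iso_nat_trans: "nat_iso C D F G eta \<Longrightarrow> nat_trans C D F G eta"
  unfolding nat_iso_def by blast

lemma nat_iso_iso: "nat_iso C D F G eta \<Longrightarrow> a \<in> Ob C \<Longrightarrow> iso_mor D (fo F a) (fo G a) (eta a)"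
  unfolding nat_iso_def by blast

lemma nat_iso_full:
  assumes D: "category D" and tau: "nat_iso C D G F tau" and G: "full C D G"
  shows "full C D F"
  unfolding full_def
proof (intro ballI)
  interpret D: cat D using D by unfold_locales
  fix x y g assume x: "x \<in> Ob C" and y: "y \<in> Ob C" and g: "g \<in> Hom D (fo F x) (fo F y)"
  have GF: "is_functor C D G" "is_functor C D F"
    using nat_iso_nat_trans[OF tau] unfolding nat_trans_def by blast+
  note ob = functor_ob[OF GF(1) x] functor_ob[OF GF(1) y] functor_ob[OF GF(2) x] functor_ob[OF GF(2) y]
  have tx: "iso_mor D (fo G x) (fo F x) (tau x)" and ty: "iso_mor D (fo G y) (fo F y) (tau y)"
    using nat_iso_iso[OF tau] x y by auto
  define phi where "phi = cmp D (inv_mor D (fo G y) (fo F y) (tau y)) (cmp D g (tau x))"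
  have gt: "cmp D g (tau x) \<in> Hom D (fo G x) (fo F y)" using D.comp_hom[OF iso_mor_hom[OF tx] g] ob by blast
  have phi: "phi \<in> Hom D (fo G x) (fo G y)"
    unfolding phi_def using D.comp_hom[OF gt inv_morD(1)[OF ty]] ob by blast
  obtain f where f: "f \<in> Hom C x y" "fm G f = phi" using G x y phi unfolding full_def by blast
  have "cmp D (fm F f) (tau x) = cmp D (tau y) phi"
    using nat_trans_naturality[OF nat_iso_nat_trans[OF tau] f(1) x y] f(2) by simp
  also have "\<dots> = cmp D g (tau x)"
    unfolding phi_def using D.comp_assoc[OF gt inv_morD(1)[OF ty] iso_mor_hom[OF ty]] inv_morD(3)[OF ty] gt ob
    by simp
  finally have "fm F f = g"
    using D.iso_cancel_right[OF tx functor_hom[OF GF(2) f(1) x y] g] ob by blast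
  then show "\<exists>f\<in>Hom C x y. fm F f = g" using f(1) by blast
qed

section \<open>Adjunctions\<close>

locale adj = C: cat C + D: cat D for C :: "('o1, 'm1) cat" and D :: "('o2, 'm2) cat" +
  fixes L :: "('o1, 'm1, 'o2, 'm2) ftr" and R :: "('o2, 'm2, 'o1, 'm1) ftr" and eta eps
  assumes adjunction: "adjunction C D L R eta eps"
begin

lemma L: "is_functor C D L" and R: "is_functor D C R"
  using adjunction unfolding adjunction_def by blast+

lemmas Lob = functor_ob[OF L] and Rob = functor_ob[OF R]
  and Lhom = functor_hom[OF L] and Rhom = functor_hom[OF R]
  and Lcomp = functor_comp[OF L] and Rcomp = functor_comp[OF R]
  and Lide = functor_ide[OF L]

lemma eta_hom: "a \<in> Ob C \<Longrightarrow> eta a \<in> Hom C a (fo R (fo L a))"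
  using adjunction nat_trans_hom[of C C fid "fcomp R L" eta a] unfolding adjunction_def by simp

lemma eps_hom: "b \<in> Ob D \<Longrightarrow> eps b \<in> Hom D (fo L (fo R b)) b"
  using adjunction nat_trans_hom[of D D "fcomp L R" fid eps b] unfolding adjunction_def by simp

lemma eta_naturality:
  "f \<in> Hom C a b \<Longrightarrow> a \<in> Ob C \<Longrightarrow> b \<in> Ob C \<Longrightarrow> cmp C (eta b) f = cmp C (fm R (fm L f)) (eta a)"
  using adjunction nat_trans_naturality[of C C fid "fcomp R L" eta f a b] unfolding adjunction_def by simp

lemma eps_naturality:
  "g \<in> Hom D a b \<Longrightarrow> a \<in> Ob D \<Longrightarrow> b \<in> Ob D \<Longrightarrow> cmp D (eps b) (fm L (fm R g)) = cmp D g (eps a)"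
  using adjunction nat_trans_naturality[of D D "fcomp L R" fid eps g a b] unfolding adjunction_def by simp

lemma triangle_L: "a \<in> Ob C \<Longrightarrow> cmp D (eps (fo L a)) (fm L (eta a)) = ide D (fo L a)"
  using adjunction unfolding adjunction_def by blast

lemma triangle_R: "b \<in> Ob D \<Longrightarrow> cmp C (fm R (eps b)) (eta (fo R b)) = ide C (fo R b)"
  using adjunction unfolding adjunction_def by blast

lemma transpose_R:
  assumes g: "g \<in> Hom C a (fo R b)" and a: "a \<in> Ob C" and b: "b \<in> Ob D"
  shows "g = cmp C (fm R (cmp D (eps b) (fm L g))) (eta a)"
proof -
  have Rb: "fo R b \<in> Ob C" using Rob b by blast
  have "cmp C (fm R (cmp D (eps b) (fm L g))) (eta a)
      = cmp C (cmp C (fm R (eps b)) (fm R (fm L g))) (eta a)"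
    using Rcomp[OF Lhom[OF g a Rb] eps_hom[OF b]] Lob a Rb b by simp
  also have "\<dots> = cmp C (fm R (eps b)) (cmp C (fm R (fm L g)) (eta a))"
    using C.comp_assoc[OF eta_hom[OF a] Rhom[OF Lhom[OF g a Rb]] Rhom[OF eps_hom[OF b]]] Lob Rob a Rb b
    by simp
  also have "\<dots> = cmp C (cmp C (fm R (eps b)) (eta (fo R b))) g"
    using eta_naturality[OF g a Rb] C.comp_assoc[OF g eta_hom[OF Rb] Rhom[OF eps_hom[OF b]]] Lob Rob a Rb b
    by simp
  also have "\<dots> = g" using triangle_R[OF b] g a Rb by simp
  finally show ?thesis by simp
qed

lemma transpose_L:
  assumes f: "f \<in> Hom D (fo L a) b" and a: "a \<in> Ob C" and b: "b \<in> Ob D"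
  shows "f = cmp D (eps b) (fm L (cmp C (fm R f) (eta a)))"
proof -
  have La: "fo L a \<in> Ob D" using Lob a by blast
  have "cmp D (eps b) (fm L (cmp C (fm R f) (eta a)))
      = cmp D (eps b) (cmp D (fm L (fm R f)) (fm L (eta a)))"
    using Lcomp[OF eta_hom[OF a] Rhom[OF f La b]] Rob Lob a La b by simp
  also have "\<dots> = cmp D (cmp D (eps b) (fm L (fm R f))) (fm L (eta a))"
    using D.comp_assoc[OF Lhom[OF eta_hom[OF a]] Lhom[OF Rhom[OF f La b]] eps_hom[OF b]] Lob Rob a La b
    by simp
  also have "\<dots> = cmp D f (cmp D (eps (fo L a)) (fm L (eta a)))"
    using eps_naturality[OF f La b] D.comp_assoc[OF Lhom[OF eta_hom[OF a]] eps_hom[OF La] f] Lob Rob a La b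
    by simp
  also have "\<dots> = f" using triangle_L[OF a] f La b by simp
  finally show ?thesis by simp
qed

lemma L_preserves_epi:
  assumes e: "epi C a a' c" and ob: "a \<in> Ob C" "a' \<in> Ob C"
  shows "epi D (fo L a) (fo L a') (fm L c)"
proof -
  have c: "c \<in> Hom C a a'" using epi_hom[OF e] .
  have La: "fo L a \<in> Ob D" "fo L a' \<in> Ob D" using Lob ob by auto
  have "g = h" if T: "T \<in> Ob D" and g: "g \<in> Hom D (fo L a') T" and h: "h \<in> Hom D (fo L a') T"
    and eq: "cmp D g (fm L c) = cmp D h (fm L c)" for T g h
  proof -
    have RT: "fo R T \<in> Ob C" using Rob T by blast
    have tr: "cmp C (cmp C (fm R k) (eta a')) c = cmp C (fm R (cmp D k (fm L c))) (eta a)"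
      if k: "k \<in> Hom D (fo L a') T" for k
      using C.comp_assoc[OF c eta_hom[OF ob(2)] Rhom[OF k La(2) T]] eta_naturality[OF c ob]
        C.comp_assoc[OF eta_hom[OF ob(1)] Rhom[OF Lhom[OF c ob] La] Rhom[OF k La(2) T]]
        Rcomp[OF Lhom[OF c ob] k La T] ob Rob La T
      by simp
    have "cmp C (fm R g) (eta a') = cmp C (fm R h) (eta a')"
      using epiD[OF e RT C.comp_hom[OF eta_hom[OF ob(2)] Rhom[OF g La(2) T]]
          C.comp_hom[OF eta_hom[OF ob(2)] Rhom[OF h La(2) T]]] tr[OF g] tr[OF h] eq ob RT Rob La
      by simp
    then show "g = h" using transpose_L[OF g ob(2) T] transpose_L[OF h ob(2) T] by simp
  qed
  then show ?thesis unfolding epi_def using Lhom[OF c ob] by blast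
qed

lemma R_preserves_mono:
  assumes m: "mono D b b' m" and ob: "b \<in> Ob D" "b' \<in> Ob D"
  shows "mono C (fo R b) (fo R b') (fm R m)"
proof -
  have mh: "m \<in> Hom D b b'" using mono_hom[OF m] .
  have Rb: "fo R b \<in> Ob C" "fo R b' \<in> Ob C" "fo L (fo R b) \<in> Ob D" using Rob Lob ob by auto
  have "u = v" if x: "x \<in> Ob C" and u: "u \<in> Hom C x (fo R b)" and v: "v \<in> Hom C x (fo R b)"
    and eq: "cmp C (fm R m) u = cmp C (fm R m) v" for x u v
  proof -
    have Lx: "fo L x \<in> Ob D" using Lob x by blast
    have tr: "cmp D m (cmp D (eps b) (fm L k)) = cmp D (eps b') (fm L (cmp C (fm R m) k))"
      if k: "k \<in> Hom C x (fo R b)" for k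
      using D.comp_assoc[OF Lhom[OF k x Rb(1)] eps_hom[OF ob(1)] mh] eps_naturality[OF mh ob]
        D.comp_assoc[OF Lhom[OF k x Rb(1)] Lhom[OF Rhom[OF mh ob] Rb(1,2)] eps_hom[OF ob(2)]]
        Lcomp[OF k Rhom[OF mh ob] x Rb(1,2)] Lob Rb x ob
      by simp
    have "cmp D (eps b) (fm L u) = cmp D (eps b) (fm L v)"
      using monoD[OF m Lx D.comp_hom[OF Lhom[OF u x Rb(1)] eps_hom[OF ob(1)] Lx Rb(3) ob(1)]
          D.comp_hom[OF Lhom[OF v x Rb(1)] eps_hom[OF ob(1)] Lx Rb(3) ob(1)]] tr[OF u] tr[OF v] eq
      by simp
    then show "u = v" using transpose_R[OF u x ob(1)] transpose_R[OF v x ob(1)] by simp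
  qed
  then show ?thesis unfolding mono_def using Rhom[OF mh ob] by blast
qed

lemma R_preserves_terminal:
  assumes t: "t \<in> Ob D" and trm: "\<forall>b\<in>Ob D. \<exists>!f. f \<in> Hom D b t" and x: "x \<in> Ob C"
  shows "\<exists>!f. f \<in> Hom C x (fo R t)"
proof -
  have Lx: "fo L x \<in> Ob D" and LRt: "fo L (fo R t) \<in> Ob D" using Lob Rob x t by blast+
  obtain k where k: "k \<in> Hom D (fo L x) t" using trm Lx by blast
  have "u = v" if u: "u \<in> Hom C x (fo R t)" and v: "v \<in> Hom C x (fo R t)" for u v
  proof -
    have "cmp D (eps t) (fm L u) = cmp D (eps t) (fm L v)"
      by (rule ex1_unique[OF trm[rule_format, OF Lx]])
        (use D.comp_hom[OF Lhom[OF u x Rob[OF t]] eps_hom[OF t] Lx LRt t]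
          D.comp_hom[OF Lhom[OF v x Rob[OF t]] eps_hom[OF t] Lx LRt t] in auto)
    then show "u = v" using transpose_R[OF u x t] transpose_R[OF v x t] by simp
  qed
  moreover have "cmp C (fm R k) (eta x) \<in> Hom C x (fo R t)"
    using C.comp_hom[OF eta_hom[OF x] Rhom[OF k Lx t] x] Rob Lob t Lx by blast
  ultimately show ?thesis by blast
qed

lemma R_zero_object:
  assumes C0: "\<exists>z. zero_object C z" and z: "zero_object D z"
  shows "zero_object C (fo R z)"
proof -
  have zo: "z \<in> Ob D" using zero_object_ob[OF z] .
  have "\<forall>b\<in>Ob D. \<exists>!f. f \<in> Hom D b z"
    using zero_object_to_ex[OF z] zero_object_to_unique[OF z] by blast
  then show ?thesis
    using C.terminal_zero_object[OF _ Rob[OF zo]] R_preserves_terminal[OF zo] C0 by blast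
qed

lemma R_zero_mor:
  "\<exists>z. zero_object C z \<Longrightarrow> zero_mor D a b f \<Longrightarrow> a \<in> Ob D \<Longrightarrow> b \<in> Ob D \<Longrightarrow>
    zero_mor C (fo R a) (fo R b) (fm R f)"
  using functor_zero_mor[OF R D.category C.category R_zero_object] by blast

text \<open>For the adjunction j^* -| j_* of a recollement, the closed objects are those in the
  essential image of j_*.\<close>

definition closed :: "'o1 \<Rightarrow> bool" where
  "closed V \<longleftrightarrow> V \<in> Ob C \<and> iso_mor C V (fo R (fo L V)) (eta V)"

lemma closed_R:
  assumes w: "w \<in> Ob D" and e: "iso_mor D (fo L (fo R w)) w (eps w)"
  shows "closed (fo R w)"
proof -
  have Rw: "fo R w \<in> Ob C" and LRw: "fo L (fo R w) \<in> Ob D" using Rob Lob w by blast+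
  have "iso_mor C (fo R w) (fo R (fo L (fo R w))) (eta (fo R w))"
    using C.section_of_iso_is_iso[OF functor_iso[OF R e LRw w] eta_hom[OF Rw] triangle_R[OF w]] Rw Rob LRw
    by blast
  then show ?thesis unfolding closed_def using Rw by blast
qed

lemma L_unit_iso:
  assumes a: "a \<in> Ob C" and e: "iso_mor D (fo L (fo R (fo L a))) (fo L a) (eps (fo L a))"
  shows "iso_mor D (fo L a) (fo L (fo R (fo L a))) (fm L (eta a))"
  using D.section_of_iso_is_iso[OF e Lhom[OF eta_hom[OF a]] triangle_L[OF a]] a Lob Rob by blast

lemma closed_iso:
  assumes V: "closed V" and f: "iso_mor C U V f" and U: "U \<in> Ob C"
  shows "closed U"
proof -
  have Vo: "V \<in> Ob C" and eV: "iso_mor C V (fo R (fo L V)) (eta V)" using V unfolding closed_def by blast+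
  note ob = U Vo Lob[OF U] Lob[OF Vo] Rob[OF Lob[OF U]] Rob[OF Lob[OF Vo]]
  define f' where "f' = inv_mor C U V f"
  have f': "iso_mor C V U f'" "cmp C f f' = ide C V" using iso_mor_inv[OF f] inv_morD(3)[OF f] f'_def by auto
  have RLf': "iso_mor C (fo R (fo L V)) (fo R (fo L U)) (fm R (fm L f'))"
    using functor_iso[OF R functor_iso[OF L f'(1)]] ob by blast
  have "cmp C (eta U) (cmp C f' f) = cmp C (fm R (fm L f')) (cmp C (eta V) f)"
    using eta_naturality[OF iso_mor_hom[OF f'(1)] Vo U] iso_mor_hom[OF f] iso_mor_hom[OF f'(1)]
      C.comp_assoc[OF iso_mor_hom[OF f] iso_mor_hom[OF f'(1)] eta_hom[OF U]]
      C.comp_assoc[OF iso_mor_hom[OF f] eta_hom[OF Vo] Rhom[OF Lhom[OF iso_mor_hom[OF f'(1)]]]] ob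
    by simp
  moreover have "cmp C f' f = ide C U" using inv_morD(2)[OF f] f'_def by simp
  ultimately have "eta U = cmp C (fm R (fm L f')) (cmp C (eta V) f)" using eta_hom[OF U] ob by simp
  moreover have "iso_mor C U (fo R (fo L U)) (cmp C (fm R (fm L f')) (cmp C (eta V) f))"
    using C.iso_comp[OF C.iso_comp[OF f eV] RLf'] ob by blast
  ultimately show ?thesis unfolding closed_def using U by simp
qed

lemma L_faithful_into_closed:
  assumes V: "closed V" and U: "U \<in> Ob C"
    and u: "u \<in> Hom C U V" and v: "v \<in> Hom C U V" and eq: "fm L u = fm L v"
  shows "u = v"
proof -
  have Vo: "V \<in> Ob C" and eV: "iso_mor C V (fo R (fo L V)) (eta V)" using V unfolding closed_def by blast+
  have "cmp C (eta V) u = cmp C (eta V) v"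
    using eta_naturality[OF u U Vo] eta_naturality[OF v U Vo] eq by simp
  then show ?thesis using C.iso_cancel_left[OF eV u v _ U Vo] Rob Lob Vo by blast
qed

lemma L_full_into_closed:
  assumes V: "closed V" and U: "U \<in> Ob C" and phi: "phi \<in> Hom D (fo L U) (fo L V)"
  shows "\<exists>psi \<in> Hom C U V. fm L psi = phi"
proof -
  have Vo: "V \<in> Ob C" and eV: "iso_mor C V (fo R (fo L V)) (eta V)" using V unfolding closed_def by blast+
  note ob = U Vo Lob[OF U] Lob[OF Vo] Rob[OF Lob[OF U]] Rob[OF Lob[OF Vo]] Lob[OF Rob[OF Lob[OF Vo]]]
  define ei where "ei = inv_mor C V (fo R (fo L V)) (eta V)"
  note ii = inv_morD[OF eV, folded ei_def]
  have Lei_hom: "fm L ei \<in> Hom D (fo L (fo R (fo L V))) (fo L V)" using Lhom[OF ii(1)] ob by blast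
  have "fm L ei = cmp D (cmp D (eps (fo L V)) (fm L (eta V))) (fm L ei)"
    using triangle_L[OF Vo] Lei_hom ob by simp
  also have "\<dots> = cmp D (eps (fo L V)) (fm L (cmp C (eta V) ei))"
    using D.comp_assoc[OF Lei_hom Lhom[OF eta_hom[OF Vo]] eps_hom] Lcomp[OF ii(1) eta_hom[OF Vo]] ob
    by simp
  also have "\<dots> = eps (fo L V)" using ii(3) Lide[OF ob(6)] eps_hom[OF ob(4)] ob by simp
  finally have Lei: "fm L ei = eps (fo L V)" .
  define psi where "psi = cmp C ei (cmp C (fm R phi) (eta U))"
  have psi0: "cmp C (fm R phi) (eta U) \<in> Hom C U (fo R (fo L V))"
    using C.comp_hom[OF eta_hom[OF U] Rhom[OF phi]] ob by blast
  have psi: "psi \<in> Hom C U V" unfolding psi_def using C.comp_hom[OF psi0 ii(1)] ob by blast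
  have "fm L psi = cmp D (eps (fo L V)) (fm L (cmp C (fm R phi) (eta U)))"
    unfolding psi_def using Lcomp[OF psi0 ii(1)] Lei ob by simp
  also have "\<dots> = phi" using transpose_L[OF phi U] ob by simp
  finally show ?thesis using psi by blast
qed

lemma L_iso_if_cokernel_killed:
  assumes D_ab: "abelian D" and C0: "\<exists>z. zero_object C z"
    and Z: "Z \<in> Ob C" and E: "E \<in> Ob C" and s: "s \<in> Hom C Z E"
    and Ls: "mono D (fo L Z) (fo L E) (fm L s)"
    and cq: "is_cokernel C Z E s Q q" and LQ: "zero_object D (fo L Q)"
  shows "iso_mor D (fo L Z) (fo L E) (fm L s)"
proof -
  interpret D: ab_cat D using D_ab by unfold_locales
  note Qq = is_cokernelD[OF cq]
  note ob = Z E Lob[OF Z] Lob[OF E] Lob[OF Qq(1)] Rob[OF Lob[OF Z]] Rob[OF Lob[OF E]]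
  show ?thesis
  proof (rule D.iso_if_mono_and_killers_zero[OF Ls ob(3,4)])
    fix c h assume c: "c \<in> Ob D" and h: "h \<in> Hom D (fo L E) c"
      and zh: "zero_mor D (fo L Z) c (cmp D h (fm L s))"
    have Rc: "fo R c \<in> Ob C" using Rob[OF c] .
    define hb where "hb = cmp C (fm R h) (eta E)"
    have hb: "hb \<in> Hom C E (fo R c)" unfolding hb_def using C.comp_hom[OF eta_hom[OF E] Rhom[OF h]] ob c Rc by blast
    have "cmp C hb s = cmp C (fm R (cmp D h (fm L s))) (eta Z)"
      unfolding hb_def
      using C.comp_assoc[OF s eta_hom[OF E] Rhom[OF h]] eta_naturality[OF s Z E]
        C.comp_assoc[OF eta_hom[OF Z] Rhom[OF Lhom[OF s Z E]] Rhom[OF h]] Rcomp[OF Lhom[OF s Z E] h] ob c Rc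
      by simp
    then have "zero_mor C Z (fo R c) (cmp C hb s)"
      using C.zero_mor_comp_right[OF R_zero_mor[OF C0 zh] eta_hom[OF Z]] ob c Rc by simp
    then obtain u where u: "u \<in> Hom C Q (fo R c)" "cmp C u q = hb" using is_cokernel_factor[OF cq Rc hb] by blast
    have "h = cmp D (eps c) (fm L hb)" unfolding hb_def using transpose_L[OF h E c] .
    also have "\<dots> = cmp D (cmp D (eps c) (fm L u)) (fm L q)"
      using u Lcomp[OF Qq(2) u(1) E Qq(1) Rc] D.comp_assoc[OF Lhom[OF Qq(2)] Lhom[OF u(1)] eps_hom[OF c]]
        ob Qq c Rc Lob
      by simp
    finally show "zero_mor D (fo L E) c h"
      using D.zero_morI[OF LQ Lhom[OF Qq(2) E Qq(1)] D.comp_hom[OF Lhom[OF u(1)] eps_hom[OF c]]] ob c Rc Qq Lob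
      by simp
  qed
qed

lemma R_full_if_counit_iso:
  assumes x: "x \<in> Ob D" and y: "y \<in> Ob D" and ex: "iso_mor D (fo L (fo R x)) x (eps x)"
    and h: "h \<in> Hom C (fo R x) (fo R y)"
  shows "\<exists>f\<in>Hom D x y. fm R f = h"
proof -
  note ob = x y Rob[OF x] Rob[OF y] Lob[OF Rob[OF x]] Lob[OF Rob[OF y]]
  define g where "g = cmp D (eps y) (fm L h)"
  define f where "f = cmp D g (inv_mor D (fo L (fo R x)) x (eps x))"
  have g: "g \<in> Hom D (fo L (fo R x)) y" unfolding g_def using D.comp_hom[OF Lhom[OF h] eps_hom[OF y]] ob by blast
  have f: "f \<in> Hom D x y" unfolding f_def using D.comp_hom[OF inv_morD(1)[OF ex] g] ob by blast
  have fe: "cmp D f (eps x) = g"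
    unfolding f_def using D.comp_assoc[OF iso_mor_hom[OF ex] inv_morD(1)[OF ex] g] inv_morD(2)[OF ex] g ob
    by simp
  have "h = cmp C (fm R g) (eta (fo R x))" unfolding g_def using transpose_R[OF h] ob by blast
  also have "\<dots> = cmp C (fm R f) (cmp C (fm R (eps x)) (eta (fo R x)))"
    using Rcomp[OF iso_mor_hom[OF ex] f] fe C.comp_assoc[OF eta_hom Rhom[OF iso_mor_hom[OF ex]] Rhom[OF f]] ob
    by (simp add: Lob Rob)
  also have "\<dots> = fm R f" using triangle_R[OF x] Rhom[OF f x y] ob by simp
  finally have "fm R f = h" ..
  then show ?thesis using f by blast
qed

end

section \<open>Equivalences\<close>

lemma nat_iso_faithful:
  assumes C: "category C" and F: "is_functor C D F" and G: "is_functor D C G"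
    and phi: "nat_iso C C (fcomp G F) fid phi"
  shows "faithful C D F"
proof -
  interpret C: cat C using C by unfold_locales
  have "f = g" if a: "a \<in> Ob C" and b: "b \<in> Ob C" and f: "f \<in> Hom C a b" and g: "g \<in> Hom C a b"
    and eq: "fm F f = fm F g" for a b f g
  proof -
    have pa: "iso_mor C (fo G (fo F a)) a (phi a)" using nat_iso_iso[OF phi a] by simp
    have "cmp C f (phi a) = cmp C g (phi a)"
      using nat_trans_naturality[OF nat_iso_nat_trans[OF phi] f a b]
        nat_trans_naturality[OF nat_iso_nat_trans[OF phi] g a b] eq by simp
    then show "f = g" using C.iso_cancel_right[OF pa f g _ b _ a] functor_ob[OF G functor_ob[OF F a]] by blast
  qed
  then show ?thesis unfolding faithful_def by blast
qed

lemma equivalenceD: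
  assumes C: "category C" and D: "category D" and eq: "equivalence C D F"
  shows "full C D F" "faithful C D F" "ess_surj C D F"
proof -
  interpret C: cat C using C by unfold_locales
  have F: "is_functor C D F" using eq unfolding equivalence_def by blast
  obtain G phi psi where G: "is_functor D C G" and phi: "nat_iso C C (fcomp G F) fid phi"
    and psi: "nat_iso D D (fcomp F G) fid psi"
    using eq unfolding equivalence_def nat_isomorphic_def by blast
  show faithful: "faithful C D F" using nat_iso_faithful[OF C F G phi] .
  show "ess_surj C D F"
    unfolding ess_surj_def iso_obj_def using nat_iso_iso[OF psi] functor_ob[OF G] by fastforce
  have "\<exists>f\<in>Hom C a b. fm F f = g"
    if a: "a \<in> Ob C" and b: "b \<in> Ob C" and g: "g \<in> Hom D (fo F a) (fo F b)" for a b g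
  proof -
    note ob = a b functor_ob[OF F a] functor_ob[OF F b] functor_ob[OF G functor_ob[OF F a]]
      functor_ob[OF G functor_ob[OF F b]]
    have pa: "iso_mor C (fo G (fo F a)) a (phi a)" and pb: "iso_mor C (fo G (fo F b)) b (phi b)"
      using nat_iso_iso[OF phi] a b by auto
    define pai where "pai = inv_mor C (fo G (fo F a)) a (phi a)"
    note pai = inv_morD[OF pa, folded pai_def]
    have Gg: "fm G g \<in> Hom C (fo G (fo F a)) (fo G (fo F b))" using functor_hom[OF G g] ob by blast
    have Ggp: "cmp C (fm G g) pai \<in> Hom C a (fo G (fo F b))" using C.comp_hom[OF pai(1) Gg] ob by blast
    define f where "f = cmp C (phi b) (cmp C (fm G g) pai)"
    have f: "f \<in> Hom C a b" unfolding f_def using C.comp_hom[OF Ggp iso_mor_hom[OF pb]] ob by blast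
    have "cmp C (phi b) (fm G (fm F f)) = cmp C f (phi a)"
      using nat_trans_naturality[OF nat_iso_nat_trans[OF phi] f a b] by simp
    also have "\<dots> = cmp C (phi b) (cmp C (cmp C (fm G g) pai) (phi a))"
      unfolding f_def using C.comp_assoc[OF iso_mor_hom[OF pa] Ggp iso_mor_hom[OF pb]] ob by simp
    also have "\<dots> = cmp C (phi b) (fm G g)"
      using C.comp_assoc[OF iso_mor_hom[OF pa] pai(1) Gg] pai(2) Gg ob by simp
    finally have "fm G (fm F f) = fm G g"
      using C.iso_cancel_left[OF pb functor_hom[OF G functor_hom[OF F f a b]] Gg] ob by blast
    then have "fm F f = g"
      using faithful_def[of D C G] nat_iso_faithful[OF D G F psi] functor_hom[OF F f a b] g ob by blast
    then show ?thesis using f by blast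
  qed
  then show "full C D F" unfolding full_def by blast
qed

locale equiv_functor = C: cat C + D: cat D for C :: "('o1, 'm1) cat" and D :: "('o2, 'm2) cat" +
  fixes F :: "('o1, 'm1, 'o2, 'm2) ftr"
  assumes F: "is_functor C D F" and full: "full C D F" and faithful: "faithful C D F"
    and ess_surj: "ess_surj C D F"
begin

lemmas Fob = functor_ob[OF F] and Fhom = functor_hom[OF F] and Fcomp = functor_comp[OF F]

lemma fullD: "a \<in> Ob C \<Longrightarrow> b \<in> Ob C \<Longrightarrow> g \<in> Hom D (fo F a) (fo F b) \<Longrightarrow> \<exists>f\<in>Hom C a b. fm F f = g"
  using full unfolding full_def by blast

lemma faithfulD:
  "a \<in> Ob C \<Longrightarrow> b \<in> Ob C \<Longrightarrow> f \<in> Hom C a b \<Longrightarrow> g \<in> Hom C a b \<Longrightarrow> fm F f = fm F g \<Longrightarrow> f = g"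
  using faithful unfolding faithful_def by blast

lemma ess_surjE:
  assumes "d \<in> Ob D"
  obtains c i where "c \<in> Ob C" "iso_mor D (fo F c) d i"
  using ess_surj assms unfolding ess_surj_def iso_obj_def by blast

lemma preserves_epi:
  assumes e: "epi C a b c" and ob: "a \<in> Ob C" "b \<in> Ob C"
  shows "epi D (fo F a) (fo F b) (fm F c)"
proof -
  have c: "c \<in> Hom C a b" using epi_hom[OF e] .
  have Fa: "fo F a \<in> Ob D" "fo F b \<in> Ob D" using Fob ob by auto
  have "g = h" if T: "T \<in> Ob D" and g: "g \<in> Hom D (fo F b) T" and h: "h \<in> Hom D (fo F b) T"
    and eq: "cmp D g (fm F c) = cmp D h (fm F c)" for T g h
  proof -
    obtain T' i where T': "T' \<in> Ob C" and i: "iso_mor D (fo F T') T i" using ess_surjE[OF T] by blast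
    define j where "j = inv_mor D (fo F T') T i"
    note j = inv_morD[OF i, folded j_def]
    have FT: "fo F T' \<in> Ob D" using Fob T' .
    have jg: "cmp D j g \<in> Hom D (fo F b) (fo F T')" and jh: "cmp D j h \<in> Hom D (fo F b) (fo F T')"
      using D.comp_hom[OF g j(1) Fa(2) T FT] D.comp_hom[OF h j(1) Fa(2) T FT] .
    obtain g' where g': "g' \<in> Hom C b T'" "fm F g' = cmp D j g" using fullD[OF ob(2) T' jg] by blast
    obtain h' where h': "h' \<in> Hom C b T'" "fm F h' = cmp D j h" using fullD[OF ob(2) T' jh] by blast
    have "fm F (cmp C g' c) = fm F (cmp C h' c)"
      using Fcomp[OF c g'(1) ob T'] Fcomp[OF c h'(1) ob T'] g'(2) h'(2) eq
        D.comp_assoc[OF Fhom[OF c ob] g j(1) Fa T FT] D.comp_assoc[OF Fhom[OF c ob] h j(1) Fa T FT]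
      by simp
    then have "cmp C g' c = cmp C h' c"
      using faithfulD[OF ob(1) T' C.comp_hom[OF c g'(1) ob T'] C.comp_hom[OF c h'(1) ob T']] by blast
    then have "cmp D j g = cmp D j h" using epiD[OF e T' g'(1) h'(1)] g' h' by simp
    then show "g = h" using D.iso_cancel_left[OF iso_mor_inv[OF i, folded j_def] g h _ Fa(2) T FT] by blast
  qed
  then show ?thesis unfolding epi_def using Fhom[OF c ob] by blast
qed

lemma reflects_mono:
  assumes m: "mono D (fo F a) (fo F b) (fm F f)" and f: "f \<in> Hom C a b" and ob: "a \<in> Ob C" "b \<in> Ob C"
  shows "mono C a b f"
proof -
  have "u = v" if x: "x \<in> Ob C" and u: "u \<in> Hom C x a" and v: "v \<in> Hom C x a"
    and uv: "cmp C f u = cmp C f v" for x u v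
  proof -
    have "cmp D (fm F f) (fm F u) = cmp D (fm F f) (fm F v)"
      using uv Fcomp[OF u f x ob] Fcomp[OF v f x ob] by simp
    then have "fm F u = fm F v" by (rule monoD[OF m Fob[OF x] Fhom[OF u x ob(1)] Fhom[OF v x ob(1)]])
    then show "u = v" using faithfulD[OF x ob(1) u v] by blast
  qed
  then show ?thesis unfolding mono_def using f by blast
qed

lemma preserves_zero_object:
  assumes D0: "\<exists>z. zero_object D z" and z: "zero_object C z"
  shows "zero_object D (fo F z)"
proof -
  have zo: "z \<in> Ob C" using zero_object_ob[OF z] .
  have Fz: "fo F z \<in> Ob D" using Fob zo .
  have "\<exists>!f. f \<in> Hom D (fo F z) b" if b: "b \<in> Ob D" for b
  proof -
    obtain b' i where b': "b' \<in> Ob C" and i: "iso_mor D (fo F b') b i" using ess_surjE[OF b] by blast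
    define j where "j = inv_mor D (fo F b') b i"
    note j = inv_morD[OF i, folded j_def]
    have Fb: "fo F b' \<in> Ob D" using Fob b' .
    obtain k where k: "k \<in> Hom C z b'" using zero_object_from_ex[OF z b'] by blast
    have "f1 = f2" if f1: "f1 \<in> Hom D (fo F z) b" and f2: "f2 \<in> Hom D (fo F z) b" for f1 f2
    proof -
      obtain g1 where g1: "g1 \<in> Hom C z b'" "fm F g1 = cmp D j f1"
        using fullD[OF zo b' D.comp_hom[OF f1 j(1) Fz b Fb]] by blast
      obtain g2 where g2: "g2 \<in> Hom C z b'" "fm F g2 = cmp D j f2"
        using fullD[OF zo b' D.comp_hom[OF f2 j(1) Fz b Fb]] by blast
      have "cmp D j f1 = cmp D j f2" using zero_object_from_unique[OF z g1(1) g2(1) b'] g1 g2 by simp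
      then show ?thesis using D.iso_cancel_left[OF iso_mor_inv[OF i, folded j_def] f1 f2 _ Fz b Fb] by blast
    qed
    moreover have "cmp D i (fm F k) \<in> Hom D (fo F z) b"
      using D.comp_hom[OF Fhom[OF k zo b'] iso_mor_hom[OF i] Fz Fb b] .
    ultimately show ?thesis by blast
  qed
  then show ?thesis using D.initial_zero_object[OF _ Fz] D0 by blast
qed

lemma reflects_iso_obj:
  assumes a: "a \<in> Ob C" and b: "b \<in> Ob C" and i: "iso_obj D (fo F a) (fo F b)"
  shows "iso_obj C a b"
proof -
  obtain u where u: "iso_mor D (fo F a) (fo F b) u" using i unfolding iso_obj_def by blast
  define v where "v = inv_mor D (fo F a) (fo F b) u"
  note v = inv_morD[OF u, folded v_def]
  obtain h where h: "h \<in> Hom C a b" "fm F h = u" using fullD[OF a b iso_mor_hom[OF u]] by blast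
  obtain h' where h': "h' \<in> Hom C b a" "fm F h' = v" using fullD[OF b a v(1)] by blast
  have "fm F (cmp C h' h) = fm F (ide C a)" and "fm F (cmp C h h') = fm F (ide C b)"
    using Fcomp[OF h(1) h'(1) a b a] Fcomp[OF h'(1) h(1) b a b] h h' v functor_ide[OF F] a b by simp_all
  then have "cmp C h' h = ide C a" and "cmp C h h' = ide C b"
    using faithfulD[OF a a C.comp_hom[OF h(1) h'(1) a b a] C.ide_hom[OF a]]
      faithfulD[OF b b C.comp_hom[OF h'(1) h(1) b a b] C.ide_hom[OF b]] by blast+
  then show ?thesis unfolding iso_obj_def iso_mor_def using h h' by blast
qed

end

section \<open>Comparing two recollements\<close>

text \<open>The adjunction j_! -| j^*
  serves to make j^* preserve monos and zero objects.\<close>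

locale recollement_comparison =
  A: ab_cat A + A2: ab_cat A2 + B: ab_cat B + B2: ab_cat B2 +
  jA: adj A A2 jA rA etaA epsA + lA: adj A2 A lA jA eta_lA eps_lA +
  jB: adj B B2 jB rB etaB epsB + lB: adj B2 B lB jB eta_lB eps_lB +
  F: equiv_functor A B F
  for A :: "('a, 'b) cat" and A2 :: "('a2, 'b2) cat" and B :: "('c, 'd) cat" and B2 :: "('c2, 'd2) cat"
    and jA rA etaA epsA lA eta_lA eps_lA jB rB etaB epsB lB eta_lB eps_lB F +
  fixes F2 :: "('a2, 'b2, 'c2, 'd2) ftr" and theta :: "'a \<Rightarrow> 'd2"
  assumes counit_iso_A: "\<And>x. x \<in> Ob A2 \<Longrightarrow> iso_mor A2 (fo jA (fo rA x)) x (epsA x)"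
    and counit_iso_B: "\<And>x. x \<in> Ob B2 \<Longrightarrow> iso_mor B2 (fo jB (fo rB x)) x (epsB x)"
    and F2: "is_functor A2 B2 F2"
    and theta: "nat_iso A B2 (fcomp jB F) (fcomp F2 jA) theta"
    and kernel_transfer: "\<And>X. X \<in> Ob B \<Longrightarrow> zero_object B2 (fo jB X) \<Longrightarrow>
      \<exists>a\<in>Ob A. zero_object A2 (fo jA a) \<and> iso_obj B (fo F a) X"
begin

lemma theta_iso: "X \<in> Ob A \<Longrightarrow> iso_mor B2 (fo jB (fo F X)) (fo F2 (fo jA X)) (theta X)"
  using nat_iso_iso[OF theta] by simp

lemma theta_naturality:
  "h \<in> Hom A X Y \<Longrightarrow> X \<in> Ob A \<Longrightarrow> Y \<in> Ob A \<Longrightarrow>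
    cmp B2 (theta Y) (fm jB (fm F h)) = cmp B2 (fm F2 (fm jA h)) (theta X)"
  using nat_trans_naturality[OF nat_iso_nat_trans[OF theta]] by simp

lemma jB_zero_mor:
  "zero_mor B a b f \<Longrightarrow> a \<in> Ob B \<Longrightarrow> b \<in> Ob B \<Longrightarrow> zero_mor B2 (fo jB a) (fo jB b) (fm jB f)"
  by (rule lB.R_zero_mor[OF B2.abelian_axioms(1)])

lemma F_zero_mor:
  "zero_mor A a b f \<Longrightarrow> a \<in> Ob A \<Longrightarrow> b \<in> Ob A \<Longrightarrow> zero_mor B (fo F a) (fo F b) (fm F f)"
  by (rule functor_zero_mor[OF F.F A.category B.category F.preserves_zero_object[OF B.abelian_axioms(1)]])

lemma closed_rA: "x \<in> Ob A2 \<Longrightarrow> jA.closed (fo rA x)"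
  by (rule jA.closed_R[OF _ counit_iso_A])

lemma closed_rB: "x \<in> Ob B2 \<Longrightarrow> jB.closed (fo rB x)"
  by (rule jB.closed_R[OF _ counit_iso_B])

lemma jB_unit_iso: "X \<in> Ob B \<Longrightarrow> iso_mor B2 (fo jB X) (fo jB (fo rB (fo jB X))) (fm jB (etaB X))"
  by (rule jB.L_unit_iso[OF _ counit_iso_B[OF jB.Lob]])

lemma hom_into_F_closed_unique:
  assumes Z: "jA.closed Z" and K: "K \<in> Ob B" and zK: "zero_object B2 (fo jB K)"
    and k1: "k1 \<in> Hom B K (fo F Z)" and k2: "k2 \<in> Hom B K (fo F Z)"
  shows "k1 = k2"
proof -
  have Zo: "Z \<in> Ob A" using Z unfolding jA.closed_def by blast
  obtain a be where a: "a \<in> Ob A" "zero_object A2 (fo jA a)" and be: "iso_mor B (fo F a) K be"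
    using kernel_transfer[OF K zK] unfolding iso_obj_def by blast
  note ob = a(1) Zo F.Fob[OF a(1)] F.Fob[OF Zo] K
  obtain h1 where h1: "h1 \<in> Hom A a Z" "fm F h1 = cmp B k1 be"
    using F.fullD[OF a(1) Zo B.comp_hom[OF iso_mor_hom[OF be] k1]] ob by blast
  obtain h2 where h2: "h2 \<in> Hom A a Z" "fm F h2 = cmp B k2 be"
    using F.fullD[OF a(1) Zo B.comp_hom[OF iso_mor_hom[OF be] k2]] ob by blast
  have "fm jA h1 = fm jA h2"
    using zero_object_from_unique[OF a(2) jA.Lhom[OF h1(1)] jA.Lhom[OF h2(1)]] ob jA.Lob by blast
  then have "h1 = h2" using jA.L_faithful_into_closed[OF Z a(1) h1(1) h2(1)] by blast
  then have "cmp B k1 be = cmp B k2 be" using h1 h2 by simp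
  then show ?thesis using B.iso_cancel_right[OF be k1 k2] ob by blast
qed

lemma unit_F_closed_mono:
  assumes Z: "jA.closed Z"
  shows "mono B (fo F Z) (fo rB (fo jB (fo F Z))) (etaB (fo F Z))"
proof -
  have FZ: "fo F Z \<in> Ob B" using Z F.Fob unfolding jA.closed_def by blast
  define M where "M = fo rB (fo jB (fo F Z))"
  have M: "M \<in> Ob B" unfolding M_def using jB.Rob jB.Lob FZ by blast
  have eta: "etaB (fo F Z) \<in> Hom B (fo F Z) M" unfolding M_def using jB.eta_hom[OF FZ] .
  have Jeta: "iso_mor B2 (fo jB (fo F Z)) (fo jB M) (fm jB (etaB (fo F Z)))"
    unfolding M_def using jB_unit_iso[OF FZ] .
  show ?thesis
    unfolding M_def[symmetric]
  proof (rule B.mono_if_kernel_zero[OF eta FZ M])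
    fix x t assume x: "x \<in> Ob B" and t: "t \<in> Hom B x (fo F Z)"
      and zt: "zero_mor B x M (cmp B (etaB (fo F Z)) t)"
    obtain K k where kk: "is_kernel B (fo F Z) M (etaB (fo F Z)) K k" using B.has_kernel[OF eta FZ M] by blast
    note Kk = is_kernelD[OF kk]
    note ob = FZ M Kk(1) jB.Lob[OF FZ] jB.Lob[OF M] jB.Lob[OF Kk(1)]
    have Jk: "mono B2 (fo jB K) (fo jB (fo F Z)) (fm jB k)"
      using lB.R_preserves_mono[OF B.kernel_mono[OF kk FZ M]] ob by blast
    have "zero_mor B2 (fo jB K) (fo jB M) (cmp B2 (fm jB (etaB (fo F Z))) (fm jB k))"
      using jB_zero_mor[OF Kk(3)] jB.Lcomp[OF Kk(2) eta] ob by simp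
    from B2.zero_mor_comp_left[OF this inv_morD(1)[OF Jeta]]
    have "zero_mor B2 (fo jB K) (fo jB (fo F Z)) (fm jB k)"
      using inv_morD(2)[OF Jeta] jB.Lhom[OF Kk(2)] ob
        B2.comp_assoc[OF jB.Lhom[OF Kk(2)] iso_mor_hom[OF Jeta] inv_morD(1)[OF Jeta]]
      by simp
    then have "zero_object B2 (fo jB K)" using B2.zero_object_if_zero_mono[OF Jk] ob by blast
    moreover obtain k0 where k0: "zero_mor B K (fo F Z) k0"
      using B.zero_mor_ex B.abelian_axioms(1) ob by blast
    ultimately have "zero_mor B K (fo F Z) k"
      using hom_into_F_closed_unique[OF Z Kk(1) _ Kk(2) zero_mor_hom[OF k0]] by simp
    moreover obtain u where u: "u \<in> Hom B x K" "cmp B k u = t" using is_kernel_factor[OF kk x t zt] by blast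
    ultimately show "zero_mor B x (fo F Z) t" using B.zero_mor_comp_right[OF _ u(1) x] ob by blast
  qed
qed

lemma jA_kills_cokernel:
  assumes Z: "Z \<in> Ob A" and E: "E \<in> Ob A" and s: "s \<in> Hom A Z E"
    and JFs: "iso_mor B2 (fo jB (fo F Z)) (fo jB (fo F E)) (fm jB (fm F s))"
    and cq: "is_cokernel A Z E s Q q"
  shows "zero_object A2 (fo jA Q)"
proof -
  note Qq = is_cokernelD[OF cq]
  note ob = Z E Qq(1) F.Fob[OF Z] F.Fob[OF E] F.Fob[OF Qq(1)]
    jB.Lob[OF F.Fob[OF Z]] jB.Lob[OF F.Fob[OF E]] jB.Lob[OF F.Fob[OF Qq(1)]]
  have Fq: "fm F q \<in> Hom B (fo F E) (fo F Q)" using F.Fhom[OF Qq(2)] ob by blast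
  have JFq: "epi B2 (fo jB (fo F E)) (fo jB (fo F Q)) (fm jB (fm F q))"
    using jB.L_preserves_epi[OF F.preserves_epi[OF A.cokernel_epi[OF cq Z E]]] ob by blast
  have "zero_mor B2 (fo jB (fo F Z)) (fo jB (fo F Q)) (cmp B2 (fm jB (fm F q)) (fm jB (fm F s)))"
    using jB_zero_mor[OF F_zero_mor[OF Qq(3)]] F.Fcomp[OF s Qq(2)] jB.Lcomp[OF F.Fhom[OF s] Fq] ob by simp
  from B2.zero_mor_comp_right[OF this inv_morD(1)[OF JFs]]
  have "zero_mor B2 (fo jB (fo F E)) (fo jB (fo F Q)) (fm jB (fm F q))"
    using inv_morD(3)[OF JFs] jB.Lhom[OF Fq] ob
      B2.comp_assoc[OF inv_morD(1)[OF JFs] iso_mor_hom[OF JFs] jB.Lhom[OF Fq]]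
    by simp
  then have "zero_object B2 (fo jB (fo F Q))" using B2.zero_object_if_zero_epi[OF JFq] ob by blast
  then obtain a where a: "a \<in> Ob A" "zero_object A2 (fo jA a)" "iso_obj B (fo F a) (fo F Q)"
    using kernel_transfer ob by blast
  have "iso_obj A2 (fo jA Q) (fo jA a)"
    using functor_iso_obj[OF jA.L iso_obj_sym[OF F.reflects_iso_obj[OF a(1) Qq(1) a(3)]]] a ob by blast
  then show ?thesis using A2.iso_obj_zero_object[OF a(2)] jA.Lob ob by blast
qed

lemma jB_F_ide_if_jA_ide:
  assumes E: "E \<in> Ob A" and t: "t \<in> Hom A E E" and Jt: "fm jA t = ide A2 (fo jA E)"
  shows "fm jB (fm F t) = ide B2 (fo jB (fo F E))"
proof -
  note ob = E jA.Lob[OF E] functor_ob[OF F2 jA.Lob[OF E]] jB.Lob[OF F.Fob[OF E]]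
  have th: "iso_mor B2 (fo jB (fo F E)) (fo F2 (fo jA E)) (theta E)" using theta_iso[OF E] .
  have "cmp B2 (theta E) (fm jB (fm F t)) = cmp B2 (theta E) (ide B2 (fo jB (fo F E)))"
    using theta_naturality[OF t E E] Jt functor_ide[OF F2] iso_mor_hom[OF th] ob by simp
  then show ?thesis
    using B2.iso_cancel_left[OF th jB.Lhom[OF F.Fhom[OF t E E]] B2.ide_hom] ob F.Fob by blast
qed

lemma iso_of_closed_if_jA_iso:
  assumes Z: "jA.closed Z" and FE: "jB.closed (fo F E)" and E: "E \<in> Ob A"
    and s: "s \<in> Hom A Z E" and Js: "iso_mor A2 (fo jA Z) (fo jA E) (fm jA s)"
  shows "iso_mor A Z E s"
proof -
  have Zo: "Z \<in> Ob A" using Z unfolding jA.closed_def by blast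
  note ob = Zo E jA.Lob[OF Zo] jA.Lob[OF E] F.Fob[OF E]
  define Ji where "Ji = inv_mor A2 (fo jA Z) (fo jA E) (fm jA s)"
  note Ji = inv_morD[OF Js, folded Ji_def]
  obtain r where r: "r \<in> Hom A E Z" "fm jA r = Ji" using jA.L_full_into_closed[OF Z E Ji(1)] by blast
  have "fm jA (cmp A r s) = fm jA (ide A Z)" using jA.Lcomp[OF s r(1)] r Ji(2) jA.Lide ob by simp
  then have rs: "cmp A r s = ide A Z"
    using jA.L_faithful_into_closed[OF Z Zo A.comp_hom[OF s r(1)] A.ide_hom] ob by blast
  have sr: "cmp A s r \<in> Hom A E E" using A.comp_hom[OF r(1) s] ob by blast
  have "fm jA (cmp A s r) = ide A2 (fo jA E)" using jA.Lcomp[OF r(1) s] r Ji(3) ob by simp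
  then have "fm jB (fm F (cmp A s r)) = fm jB (fm F (ide A E))"
    using jB_F_ide_if_jA_ide[OF E sr] functor_ide[OF F.F] jB.Lide ob by simp
  then have "fm F (cmp A s r) = fm F (ide A E)"
    using jB.L_faithful_into_closed[OF FE _ F.Fhom[OF sr] F.Fhom[OF A.ide_hom]] ob by blast
  then have "cmp A s r = ide A E" using F.faithfulD[OF E E sr A.ide_hom] ob by blast
  then show ?thesis unfolding iso_mor_def using s r(1) rs by blast
qed

lemma F_closed:
  assumes Z: "jA.closed Z"
  shows "jB.closed (fo F Z)"
proof -
  have Zo: "Z \<in> Ob A" using Z unfolding jA.closed_def by blast
  define M where "M = fo rB (fo jB (fo F Z))"
  define eta where "eta = etaB (fo F Z)"
  note ob = Zo F.Fob[OF Zo] jB.Lob[OF F.Fob[OF Zo]]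
  have M: "M \<in> Ob B" "jB.closed M" unfolding M_def using jB.Rob closed_rB ob by blast+
  have eta: "eta \<in> Hom B (fo F Z) M" unfolding eta_def M_def using jB.eta_hom ob by blast
  have eta_mono: "mono B (fo F Z) M eta" unfolding eta_def M_def using unit_F_closed_mono[OF Z] .
  obtain E al where E: "E \<in> Ob A" and al: "iso_mor B (fo F E) M al" using F.ess_surjE[OF M(1)] by blast
  define ai where "ai = inv_mor B (fo F E) M al"
  note ai = inv_morD[OF al, folded ai_def] and ob = ob E F.Fob[OF E] M(1)
  have FE: "jB.closed (fo F E)" using jB.closed_iso[OF M(2) al] ob by blast
  obtain s where s: "s \<in> Hom A Z E" "fm F s = cmp B ai eta"
    using F.fullD[OF Zo E B.comp_hom[OF eta ai(1)]] ob by blast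
  have "mono B (fo F Z) (fo F E) (fm F s)"
    using B.mono_comp[OF eta_mono B.iso_mono[OF iso_mor_inv[OF al, folded ai_def]]] s ob by simp
  then have s_mono: "mono A Z E s" using F.reflects_mono[OF _ s(1)] ob by blast
  have JFs: "iso_mor B2 (fo jB (fo F Z)) (fo jB (fo F E)) (fm jB (fm F s))"
    using B2.iso_comp[OF jB_unit_iso[OF ob(2), folded M_def eta_def]
        functor_iso[OF jB.L iso_mor_inv[OF al, folded ai_def]]]
      jB.Lcomp[OF eta ai(1)] s(2) ob jB.Lob by simp
  obtain Q q where cq: "is_cokernel A Z E s Q q" using A.has_cokernel[OF s(1)] ob by blast
  have "iso_mor A2 (fo jA Z) (fo jA E) (fm jA s)"
    using jA.L_iso_if_cokernel_killed[OF A2.abelian _ Zo E s(1) lA.R_preserves_mono[OF s_mono]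
        cq jA_kills_cokernel[OF Zo E s(1) JFs cq]] A.abelian_axioms(1) ob by blast
  then have "iso_mor B (fo F Z) (fo F E) (fm F s)"
    using functor_iso[OF F.F iso_of_closed_if_jA_iso[OF Z FE E s(1)]] ob by blast
  moreover have "eta = cmp B al (fm F s)"
    using s(2) B.comp_assoc[OF eta ai(1) iso_mor_hom[OF al]] ai(3) eta ob by simp
  ultimately have "iso_mor B (fo F Z) M eta" using B.iso_comp[OF _ al] ob by simp
  then show ?thesis unfolding jB.closed_def eta_def M_def using ob by blast
qed

lemma F2_iso_jB_F_rA:
  "nat_iso A2 B2 (fcomp jB (fcomp F rA)) F2 (\<lambda>x. cmp B2 (fm F2 (epsA x)) (theta (fo rA x)))"
proof -
  have G: "is_functor A2 B2 (fcomp jB (fcomp F rA))"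
    using is_functor_fcomp[OF is_functor_fcomp[OF jA.R F.F] jB.L] .
  have iso: "iso_mor B2 (fo jB (fo F (fo rA x))) (fo F2 x) (cmp B2 (fm F2 (epsA x)) (theta (fo rA x)))"
    if x: "x \<in> Ob A2" for x
    using B2.iso_comp[OF theta_iso functor_iso[OF F2 counit_iso_A[OF x]]] x
      jA.Rob jA.Lob F.Fob jB.Lob functor_ob[OF F2] by simp
  have "cmp B2 (cmp B2 (fm F2 (epsA y)) (theta (fo rA y))) (fm jB (fm F (fm rA f)))
      = cmp B2 (fm F2 f) (cmp B2 (fm F2 (epsA x)) (theta (fo rA x)))"
    if x: "x \<in> Ob A2" and y: "y \<in> Ob A2" and f: "f \<in> Hom A2 x y" for x y f
  proof -
    note ob = x y jA.Rob[OF x] jA.Rob[OF y] jA.Lob[OF jA.Rob[OF x]] jA.Lob[OF jA.Rob[OF y]]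
      F.Fob[OF jA.Rob[OF x]] F.Fob[OF jA.Rob[OF y]] jB.Lob[OF F.Fob[OF jA.Rob[OF x]]]
      jB.Lob[OF F.Fob[OF jA.Rob[OF y]]] functor_ob[OF F2 x] functor_ob[OF F2 y]
      functor_ob[OF F2 jA.Lob[OF jA.Rob[OF x]]] functor_ob[OF F2 jA.Lob[OF jA.Rob[OF y]]]
    have Rf: "fm rA f \<in> Hom A (fo rA x) (fo rA y)" using jA.Rhom[OF f x y] .
    have ex: "epsA x \<in> Hom A2 (fo jA (fo rA x)) x" and ey: "epsA y \<in> Hom A2 (fo jA (fo rA y)) y"
      using jA.eps_hom x y by blast+
    have "cmp B2 (cmp B2 (fm F2 (epsA y)) (theta (fo rA y))) (fm jB (fm F (fm rA f)))
        = cmp B2 (fm F2 (epsA y)) (cmp B2 (fm F2 (fm jA (fm rA f))) (theta (fo rA x)))"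
      using B2.comp_assoc[OF jB.Lhom[OF F.Fhom[OF Rf]] iso_mor_hom[OF theta_iso] functor_hom[OF F2 ey]]
        theta_naturality[OF Rf] ob by simp
    also have "\<dots> = cmp B2 (fm F2 (cmp A2 (epsA y) (fm jA (fm rA f)))) (theta (fo rA x))"
      using B2.comp_assoc[OF iso_mor_hom[OF theta_iso] functor_hom[OF F2 jA.Lhom[OF Rf]] functor_hom[OF F2 ey]]
        functor_comp[OF F2 jA.Lhom[OF Rf] ey] ob by simp
    also have "\<dots> = cmp B2 (fm F2 (cmp A2 f (epsA x))) (theta (fo rA x))"
      using jA.eps_naturality[OF f x y] by simp
    also have "\<dots> = cmp B2 (fm F2 f) (cmp B2 (fm F2 (epsA x)) (theta (fo rA x)))"
      using functor_comp[OF F2 ex f] B2.comp_assoc[OF iso_mor_hom[OF theta_iso] functor_hom[OF F2 ex]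
          functor_hom[OF F2 f]] ob by simp
    finally show ?thesis .
  qed
  then show ?thesis
    unfolding nat_iso_def nat_trans_def using G F2 iso iso_mor_hom[OF iso] by simp
qed

lemma jB_F_rA_full: "full A2 B2 (fcomp jB (fcomp F rA))"
  unfolding full_def
proof (intro ballI)
  fix x y phi assume x: "x \<in> Ob A2" and y: "y \<in> Ob A2"
    and "phi \<in> Hom B2 (fo (fcomp jB (fcomp F rA)) x) (fo (fcomp jB (fcomp F rA)) y)"
  then have phi: "phi \<in> Hom B2 (fo jB (fo F (fo rA x))) (fo jB (fo F (fo rA y)))" by simp
  note ob = jA.Rob[OF x] jA.Rob[OF y] F.Fob[OF jA.Rob[OF x]]
  obtain psi where psi: "psi \<in> Hom B (fo F (fo rA x)) (fo F (fo rA y))" "fm jB psi = phi"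
    using jB.L_full_into_closed[OF F_closed[OF closed_rA[OF y]] ob(3) phi] by blast
  obtain h where h: "h \<in> Hom A (fo rA x) (fo rA y)" "fm F h = psi"
    using F.fullD[OF ob(1,2) psi(1)] by blast
  obtain f where f: "f \<in> Hom A2 x y" "fm rA f = h"
    using jA.R_full_if_counit_iso[OF x y counit_iso_A[OF x] h(1)] by blast
  have "fm (fcomp jB (fcomp F rA)) f = phi" using f(2) h(2) psi(2) by simp
  then show "\<exists>f\<in>Hom A2 x y. fm (fcomp jB (fcomp F rA)) f = phi" using f(1) by blast
qed

lemma F2_full: "full A2 B2 F2"
  using nat_iso_full[OF B2.category F2_iso_jB_F_rA jB_F_rA_full] .

lemma F2_ess_surj: "ess_surj A2 B2 F2"
  unfolding ess_surj_def
proof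
  fix d assume d: "d \<in> Ob B2"
  obtain X al where X: "X \<in> Ob A" and al: "iso_mor B (fo F X) (fo rB d) al"
    using F.ess_surjE[OF jB.Rob[OF d]] by blast
  note ob = d X F.Fob[OF X] jB.Rob[OF d] jA.Lob[OF X] functor_ob[OF F2 jA.Lob[OF X]]
    jB.Lob[OF F.Fob[OF X]] jB.Lob[OF jB.Rob[OF d]]
  have "iso_mor B2 (fo F2 (fo jA X)) d
      (cmp B2 (epsB d) (cmp B2 (fm jB al) (inv_mor B2 (fo jB (fo F X)) (fo F2 (fo jA X)) (theta X))))"
    using B2.iso_comp[OF B2.iso_comp[OF iso_mor_inv[OF theta_iso[OF X]] functor_iso[OF jB.L al]]
        counit_iso_B[OF d]] ob by blast
  then show "\<exists>c\<in>Ob A2. iso_obj B2 (fo F2 c) d" unfolding iso_obj_def using ob by blast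
qed

end

lemma recollementE:
  assumes "recollement A1 A A2 ilow iup ish jup jsh jlow"
  obtains eta eps eta' eps' where "ab_cat A" "ab_cat A2" "adj A A2 jup jlow eta eps"
    "\<And>a. a \<in> Ob A2 \<Longrightarrow> iso_mor A2 (fo jup (fo jlow a)) a (eps a)" "adj A2 A jsh jup eta' eps'"
proof -
  have "abelian A" "abelian A2" using assms unfolding recollement_def by blast+
  then have ab: "ab_cat A" "ab_cat A2"
    by (auto intro!: ab_cat.intro cat.intro ab_cat_axioms.intro simp: abelian_def)
  note cats = ab_cat.axioms(1)[OF ab(1)] ab_cat.axioms(1)[OF ab(2)]
  obtain eta eps eta' eps' where adj: "adjunction A A2 jup jlow eta eps" "adjunction A2 A jsh jup eta' eps'"
    and iso: "\<forall>a\<in>Ob A2. iso_mor A2 (fo jup (fo jlow a)) a (eps a)"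
    using assms unfolding recollement_def by (elim conjE exE) (rule that)
  show ?thesis
    using that[OF ab adj.intro[OF cats adj_axioms.intro[OF adj(1)]] iso[rule_format]
        adj.intro[OF cats(2,1) adj_axioms.intro[OF adj(2)]]] .
qed

lemma recollement_kernel_transfer:
  assumes RA: "recollement A1 A A2 iA iupA ishA jA jshA jlowA"
    and RB: "recollement B1 B B2 iB iupB ishB jB jshB jlowB"
    and F: "is_functor A B F" and F1: "equivalence A1 B1 F1"
    and kappa: "nat_isomorphic A1 B (fcomp iB F1) (fcomp F iA)"
    and X: "X \<in> Ob B" "zero_object B2 (fo jB X)"
  shows "\<exists>a\<in>Ob A. zero_object A2 (fo jA a) \<and> iso_obj B (fo F a) X"
proof -
  have cat: "category A" "category B" "category A1" "category B1"
    using RA RB unfolding recollement_def abelian_def by blast+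
  have kerA: "\<forall>x\<in>Ob A. zero_object A2 (fo jA x) \<longleftrightarrow> (\<exists>y\<in>Ob A1. iso_obj A (fo iA y) x)"
    and kerB: "\<forall>x\<in>Ob B. zero_object B2 (fo jB x) \<longleftrightarrow> (\<exists>y\<in>Ob B1. iso_obj B (fo iB y) x)"
    and iA: "is_functor A1 A iA" and iB: "is_functor B1 B iB"
    using RA RB unfolding recollement_def by blast+
  interpret A: cat A using cat by unfold_locales
  interpret B: cat B using cat by unfold_locales
  have F1': "is_functor A1 B1 F1" using F1 unfolding equivalence_def by blast
  obtain y where y: "y \<in> Ob B1" "iso_obj B (fo iB y) X" using kerB X by blast
  obtain a where a: "a \<in> Ob A1" "iso_obj B1 (fo F1 a) y"
    using equivalenceD(3)[OF cat(3,4) F1] y unfolding ess_surj_def by blast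
  note ob = functor_ob[OF iB functor_ob[OF F1' a(1)]] functor_ob[OF iB y(1)]
    functor_ob[OF F functor_ob[OF iA a(1)]] functor_ob[OF F1' a(1)] functor_ob[OF iA a(1)]
  obtain k where "nat_iso A1 B (fcomp iB F1) (fcomp F iA) k" using kappa unfolding nat_isomorphic_def ..
  then have "iso_obj B (fo iB (fo F1 a)) (fo F (fo iA a))"
    using nat_iso_iso a(1) unfolding iso_obj_def by fastforce
  then have "iso_obj B (fo F (fo iA a)) (fo iB y)"
    by (rule B.iso_obj_trans[OF iso_obj_sym functor_iso_obj[OF iB a(2) ob(4) y(1)] ob(3,1,2)])
  then have "iso_obj B (fo F (fo iA a)) X" by (rule B.iso_obj_trans[OF _ y(2) ob(3,2) X(1)])
  moreover have "\<exists>y\<in>Ob A1. iso_obj A (fo iA y) (fo iA a)" using a(1) A.iso_obj_refl[OF ob(5)] by blast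
  then have "zero_object A2 (fo jA (fo iA a))" using kerA ob(5) by blast
  ultimately show ?thesis using ob by blast
qed

theorem lemma4p4:
  fixes A1 :: "('a1, 'b1) cat" and A :: "('a, 'b) cat" and A2 :: "('a2, 'b2) cat"
    and B1 :: "('c1, 'd1) cat" and B :: "('c, 'd) cat" and B2 :: "('c2, 'd2) cat"
    and ilowA :: "('a1, 'b1, 'a, 'b) ftr" and iupA ishA :: "('a, 'b, 'a1, 'b1) ftr"
    and jupA :: "('a, 'b, 'a2, 'b2) ftr" and jshA jlowA :: "('a2, 'b2, 'a, 'b) ftr"
    and ilowB :: "('c1, 'd1, 'c, 'd) ftr" and iupB ishB :: "('c, 'd, 'c1, 'd1) ftr"
    and jupB :: "('c, 'd, 'c2, 'd2) ftr" and jshB jlowB :: "('c2, 'd2, 'c, 'd) ftr"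
    and F :: "('a, 'b, 'c, 'd) ftr" and F1 :: "('a1, 'b1, 'c1, 'd1) ftr"
    and F2 :: "('a2, 'b2, 'c2, 'd2) ftr"
  assumes "recollement A1 A A2 ilowA iupA ishA jupA jshA jlowA"
    and "recollement B1 B B2 ilowB iupB ishB jupB jshB jlowB"
    and "is_functor A B F" and "is_functor A1 B1 F1" and "is_functor A2 B2 F2"
    and "equivalence A B F" and "equivalence A1 B1 F1"
    and "nat_isomorphic A B2 (fcomp jupB F) (fcomp F2 jupA)"
    and "nat_isomorphic A1 B (fcomp ilowB F1) (fcomp F ilowA)"
  shows "full A2 B2 F2 \<and> ess_surj A2 B2 F2"
proof -
  obtain etaA epsA eta_lA eps_lA where A: "ab_cat A" "ab_cat A2" "adj A A2 jupA jlowA etaA epsA"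
    "\<And>a. a \<in> Ob A2 \<Longrightarrow> iso_mor A2 (fo jupA (fo jlowA a)) a (epsA a)" "adj A2 A jshA jupA eta_lA eps_lA"
    using recollementE[OF assms(1)] by blast
  obtain etaB epsB eta_lB eps_lB where B: "ab_cat B" "ab_cat B2" "adj B B2 jupB jlowB etaB epsB"
    "\<And>a. a \<in> Ob B2 \<Longrightarrow> iso_mor B2 (fo jupB (fo jlowB a)) a (epsB a)" "adj B2 B jshB jupB eta_lB eps_lB"
    using recollementE[OF assms(2)] by blast
  obtain theta where theta: "nat_iso A B2 (fcomp jupB F) (fcomp F2 jupA) theta"
    using assms(8) unfolding nat_isomorphic_def by blast
  have F: "equiv_functor A B F"
    using equivalenceD[OF _ _ assms(6)] assms(3) A(1) B(1) ab_cat.axioms(1) cat.category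
    by (metis equiv_functor.intro equiv_functor_axioms.intro)
  interpret recollement_comparison A A2 B B2 jupA jlowA etaA epsA jshA eta_lA eps_lA
      jupB jlowB etaB epsB jshB eta_lB eps_lB F F2 theta
    using A B F theta assms(5) recollement_kernel_transfer[OF assms(1,2,3,7,9)]
    by (intro recollement_comparison.intro recollement_comparison_axioms.intro) auto
  show ?thesis using F2_full F2_ess_surj by blast
qed

end
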